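(* Let $X$ and $\Theta$ be compact metric spaces, $\tau:\Theta\times X\to X$, $(\theta,x)\mapsto\tau_\theta(x)$, continuous, $\Omega=X\times\Theta$, $T:\Omega\to X$ the first-coordinate projection, and $\mathcal{H}$ the set of holonomic Borel probability measures on $\Omega$, i.e. those $\hat\nu$ with $\int_\Omega [f(\tau_\theta(x))-f(x)]\,d\hat\nu(x,\theta)=0$ for all $f\in C(X,\mathbb{R})$; for $\hat\nu\in\mathcal{H}$ let $\Phi(\hat\nu)=\nu=T_*\hat\nu$. Fix a Borel probability $\mu$ on $\Theta$. For positive continuous $\psi:X\to\mathbb{R}$ define $dq_x(\theta)=\psi(\tau_\theta(x))\,d\mu(\theta)$, $B_q(g)(x)=\int_\Theta g(\tau_\theta(x))\,dq_x(\theta)$, $P(\psi)=\sup_{\hat\nu\in\mathcal{H}}\inf_{g\in C(X,\mathbb{R}),g>0}\int_X\ln\frac{B_q(g)}{g}\,d\nu$, and let $h_v(\hat\nu)=\inf_{g\in C(X,\mathbb{R}),g>0}\int_X\ln\frac{B_\mu(g)}{g}\,d\nu$ with $B_\mu(g)(x)=\int_\Theta g(\tau_\theta(x))\,d\mu(\theta)$. An equilibrium state for $\psi$ is $\hat\nu\in\mathcal{H}$ with $h_v(\hat\nu)+\int_X\log\psi\,d\nu=P(\psi)$. Define $p:C(X,\mathbb{R})\to\mathbb{R}$ by $p(\varphi)=P(\exp(\varphi))$. Let $\psi:X\to\mathbb{R}$ be positive and continuous. If $p$ is Gâteaux differentiable at $\varphi=\log\psi$, then \[ \#\{\Phi(\hat\mu):\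 \hat\mu \text{ is an equilibrium state for } \psi\}=1. \] *)

theory Defs
  imports "HOL-Probability.Probability"
begin

text \<open>Omega = X \<times> Theta is modelled as the product type 'a \<times> 'b; X and Theta are the
  whole (compact) metric types 'a and 'b.\<close>

definition holonomic :: "('b::topological_space \<Rightarrow> 'a::topological_space \<Rightarrow> 'a) \<Rightarrow> ('a \<times> 'b) measure \<Rightarrow> bool" where
  "holonomic \<tau> N \<longleftrightarrow> prob_space N \<and> sets N = sets borel \<and>
     (\<forall>f::'a \<Rightarrow> real. continuous_on UNIV f \<longrightarrow>
        (\<integral>\<omega>. f (\<tau> (snd \<omega>) (fst \<omega>)) - f (fst \<omega>) \<partial>N) = 0)"

definition Phi :: "('a::topological_space \<times> 'b::topological_space) measure \<Rightarrow> 'a measure" where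
  "Phi N = distr N borel fst"

text \<open>B_q(g)(x) = \<integral> g(\<tau>_\<theta> x) \<psi>(\<tau>_\<theta> x) d\<mu>(\<theta>); with \<psi> = 1 this is B_\<mu>.\<close>
definition Bop :: "'b measure \<Rightarrow> ('b \<Rightarrow> 'a \<Rightarrow> 'a) \<Rightarrow> ('a \<Rightarrow> real) \<Rightarrow> ('a \<Rightarrow> real) \<Rightarrow> 'a \<Rightarrow> real" where
  "Bop \<mu> \<tau> \<psi> g x = (\<integral>\<theta>. g (\<tau> \<theta> x) * \<psi> (\<tau> \<theta> x) \<partial>\<mu>)"

definition infB :: "'b::topological_space measure \<Rightarrow> ('b \<Rightarrow> 'a \<Rightarrow> 'a) \<Rightarrow> ('a \<Rightarrow> real) \<Rightarrow> ('a::topological_space \<times> 'b) measure \<Rightarrow> ereal" where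
  "infB \<mu> \<tau> \<psi> N = (INF g \<in> {g :: 'a \<Rightarrow> real. continuous_on UNIV g \<and> (\<forall>x. g x > 0)}.
       ereal (\<integral>x. ln (Bop \<mu> \<tau> \<psi> g x / g x) \<partial>(Phi N)))"

definition entropy_v :: "'b::topological_space measure \<Rightarrow> ('b \<Rightarrow> 'a \<Rightarrow> 'a) \<Rightarrow> ('a::topological_space \<times> 'b) measure \<Rightarrow> ereal" where
  "entropy_v \<mu> \<tau> N = infB \<mu> \<tau> (\<lambda>_. 1) N"

definition pressure :: "'b::topological_space measure \<Rightarrow> ('b \<Rightarrow> 'a::topological_space \<Rightarrow> 'a) \<Rightarrow> ('a \<Rightarrow> real) \<Rightarrow> ereal" where
  "pressure \<mu> \<tau> \<psi> = (SUP N \<in> {N. holonomic \<tau> N}. infB \<mu> \<tau> \<psi> N)"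

definition equilibrium_state :: "'b::topological_space measure \<Rightarrow> ('b \<Rightarrow> 'a::topological_space \<Rightarrow> 'a) \<Rightarrow> ('a \<Rightarrow> real) \<Rightarrow> ('a \<times> 'b) measure \<Rightarrow> bool" where
  "equilibrium_state \<mu> \<tau> \<psi> N \<longleftrightarrow> holonomic \<tau> N \<and>
     entropy_v \<mu> \<tau> N + ereal (\<integral>x. ln (\<psi> x) \<partial>(Phi N)) = pressure \<mu> \<tau> \<psi>"

definition gateaux_differentiable_C :: "(('a::topological_space \<Rightarrow> real) \<Rightarrow> real) \<Rightarrow> ('a \<Rightarrow> real) \<Rightarrow> bool" where
  "gateaux_differentiable_C p \<phi> \<longleftrightarrow> (\<exists>L :: ('a \<Rightarrow> real) \<Rightarrow> real.
     (\<forall>f g. continuous_on UNIV f \<longrightarrow> continuous_on UNIV g \<longrightarrow> L (\<lambda>x. f x + g x) = L f + L g) \<and>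
     (\<forall>c f. continuous_on UNIV f \<longrightarrow> L (\<lambda>x. c * f x) = c * L f) \<and>
     (\<exists>K. \<forall>f. continuous_on UNIV f \<longrightarrow> \<bar>L f\<bar> \<le> K * (SUP x. \<bar>f x\<bar>)) \<and>
     (\<forall>h. continuous_on UNIV h \<longrightarrow>
        ((\<lambda>t. (p (\<lambda>x. \<phi> x + t * h x) - p \<phi>) / t) \<longlongrightarrow> L h) (at 0)))"

end

theory Submission
  imports Defs
begin

text \<open>Existence: weak compactness of Borel probability measures on a compact metric space (obtained
  by coding the space into a compact set of reals and applying Helly's selection theorem) makes the
  holonomic measures compact, and \<open>infB \<psi>\<close>, an infimum of weakly continuous functionals, is upper
  semicontinuous; so the supremum defining \<open>P(\<psi>)\<close> is attained. It is finite because
  \<open>infB \<psi> N = h_v(N) + \<integral> log \<psi> d\<Phi>(N)\<close> with \<open>h_v \<le> 0\<close>, while \<open>\<nu> \<otimes> \<mu>\<close> is holonomic with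
  \<open>h_v \<ge> 0\<close> for every \<open>B_\<mu>\<close>-stationary \<open>\<nu>\<close>, which exists by Krylov--Bogolyubov.

  Uniqueness: testing the pressure at an equilibrium state \<open>N\<close> gives
  \<open>p(log \<psi> + t h) \<ge> p(log \<psi>) + t \<integral> h d\<Phi>(N)\<close> for all \<open>t\<close>, so \<open>\<integral> h d\<Phi>(N)\<close> is the
  Gateaux derivative of \<open>p\<close> at \<open>log \<psi>\<close> in direction \<open>h\<close>. Thus all \<open>\<Phi>(N)\<close> have the same
  integrals of continuous functions, which determine a finite Borel measure on a compact metric
  space.\<close>

lemma continuous_on_compact_UNIV_boundedE:
  fixes f :: "'c::metric_space \<Rightarrow> real"
  assumes "compact (UNIV :: 'c set)" "continuous_on UNIV f"
  obtains B where "\<And>x. \<bar>f x\<bar> \<le> B"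
proof -
  have "bounded (range f)"
    using compact_continuous_image[OF assms(2,1)] compact_imp_bounded by blast
  then show ?thesis using that unfolding bounded_iff by auto
qed

lemma continuous_on_compact_UNIV_pos_boundedE:
  fixes h :: "'c::metric_space \<Rightarrow> real"
  assumes "compact (UNIV :: 'c set)" "continuous_on UNIV h" "\<And>x. 0 < h x"
  obtains c where "0 < c" "\<And>x. c \<le> h x"
proof -
  obtain x0 where "\<And>x. h x0 \<le> h x"
    using continuous_attains_inf[OF assms(1) _ assms(2)] by auto
  then show ?thesis using that[of "h x0"] assms(3) by blast
qed

lemma measurable_continuous_sets_borel:
  assumes "continuous_on UNIV f" "sets M = sets borel"
  shows "f \<in> M \<rightarrow>\<^sub>M borel"
  using borel_measurable_continuous_onI[OF assms(1)] measurable_cong_sets[OF assms(2) refl] by blast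

lemma integrable_continuous_compact:
  fixes f :: "'c::metric_space \<Rightarrow> real"
  assumes "compact (UNIV :: 'c set)" "continuous_on UNIV f" "finite_measure M" "sets M = sets borel"
  shows "integrable M f"
proof -
  obtain B where "\<And>x. \<bar>f x\<bar> \<le> B" using continuous_on_compact_UNIV_boundedE[OF assms(1,2)] by blast
  then show ?thesis
    using finite_measure.integrable_const_bound[OF assms(3), of f B]
      measurable_continuous_sets_borel[OF assms(2,4)] by auto
qed

lemma prob_space_abs_integral_le:
  fixes f :: "'c \<Rightarrow> real"
  assumes "prob_space M" "\<And>x. \<bar>f x\<bar> \<le> B"
  shows "\<bar>\<integral>x. f x \<partial>M\<bar> \<le> B"
proof -
  interpret prob_space M by fact
  have "\<bar>\<integral>x. f x \<partial>M\<bar> \<le> (\<integral>x. \<bar>f x\<bar> \<partial>M)" by (rule integral_abs_bound)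
  also have "\<dots> \<le> (\<integral>x. B \<partial>M)"
  proof (cases "integrable M (\<lambda>x. \<bar>f x\<bar>)")
    case True then show ?thesis using assms(2) by (intro integral_mono) auto
  next
    case False then show ?thesis using assms(2)[of undefined] by (simp add: not_integrable_integral_eq)
  qed
  finally show ?thesis by (simp add: prob_space)
qed

lemma integral_continuous_pos:
  fixes h :: "'c::metric_space \<Rightarrow> real"
  assumes "compact (UNIV :: 'c set)" "prob_space M" "sets M = sets borel"
    and "continuous_on UNIV h" "\<And>x. 0 < h x"
  shows "0 < (\<integral>x. h x \<partial>M)"
proof -
  interpret prob_space M by fact
  obtain c where c: "0 < c" "\<And>x. c \<le> h x"
    using continuous_on_compact_UNIV_pos_boundedE[OF assms(1,4,5)] by blast
  have "(\<integral>x. c \<partial>M) \<le> (\<integral>x. h x \<partial>M)"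
    using c integrable_continuous_compact[OF assms(1,4) finite_measure_axioms assms(3)]
    by (intro integral_mono) auto
  then show ?thesis using c by (simp add: prob_space)
qed

lemma integral_ln_le_ln_integral:
  fixes h :: "'c::metric_space \<Rightarrow> real"
  assumes "compact (UNIV :: 'c set)" "prob_space M" "sets M = sets borel"
    and "continuous_on UNIV h" "\<And>x. 0 < h x"
  shows "(\<integral>x. ln (h x) \<partial>M) \<le> ln (\<integral>x. h x \<partial>M)"
proof -
  interpret prob_space M by fact
  have "continuous_on UNIV (\<lambda>x. - ln (h x))"
    using assms(4,5) by (intro continuous_intros) (auto simp: less_imp_neq[symmetric])
  then have "- ln (\<integral>x. h x \<partial>M) \<le> (\<integral>x. - ln (h x) \<partial>M)"
    using assms(5) ln_concave
    by (intro jensens_inequality[where I="{0<..}"] integrable_continuous_compact[OF assms(1)]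
        finite_measure_axioms assms(3,4)) (auto simp: concave_on_def)
  then show ?thesis by simp
qed

section \<open>Finite Borel measures are determined by integrals of continuous functions\<close>

definition infdist_cutoff :: "'c::metric_space set \<Rightarrow> nat \<Rightarrow> 'c \<Rightarrow> real" where
  "infdist_cutoff F j x = max 0 (1 - real j * infdist x F)"

lemma continuous_on_infdist_cutoff: "continuous_on UNIV (infdist_cutoff F j)"
  unfolding infdist_cutoff_def by (intro continuous_intros)

lemma infdist_cutoff_abs_le: "\<bar>infdist_cutoff F j x\<bar> \<le> 1"
  unfolding infdist_cutoff_def using infdist_nonneg[of x F] by auto

lemma infdist_cutoff_eq_1: "x \<in> F \<Longrightarrow> infdist_cutoff F j x = 1"
  by (simp add: infdist_cutoff_def infdist_zero)

lemma infdist_cutoff_tendsto_indicator: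
  assumes "closed F" "F \<noteq> {}"
  shows "(\<lambda>j. infdist_cutoff F j x) \<longlonglongrightarrow> indicator F x"
proof (cases "x \<in> F")
  case True then show ?thesis by (simp add: infdist_cutoff_eq_1)
next
  case False
  then have d: "0 < infdist x F"
    using in_closed_iff_infdist_zero[OF assms] infdist_nonneg[of x F] by auto
  obtain N :: nat where "1 / infdist x F < N" using reals_Archimedean2 by blast
  then have "1 < real N * infdist x F" using d by (simp add: field_simps)
  moreover have "real N * infdist x F \<le> real j * infdist x F" if "N \<le> j" for j
    using that d by (intro mult_right_mono) auto
  ultimately have "infdist_cutoff F j x = indicator F x" if "N \<le> j" for j
    using that False by (fastforce simp: infdist_cutoff_def)
  then show ?thesis by (intro tendsto_eventually) (auto simp: eventually_sequentially)
qed

lemma integral_infdist_cutoff_tendsto_measure: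
  fixes F :: "'c::metric_space set"
  assumes "closed F" "F \<noteq> {}" "finite_measure M" "sets M = sets borel"
  shows "(\<lambda>j. \<integral>x. infdist_cutoff F j x \<partial>M) \<longlonglongrightarrow> measure M F"
proof -
  interpret finite_measure M by fact
  have "F \<in> sets M" using assms(1,4) by simp
  moreover have "(\<lambda>j. \<integral>x. infdist_cutoff F j x \<partial>M) \<longlonglongrightarrow> (\<integral>x. indicator F x \<partial>M)"
    using \<open>F \<in> sets M\<close> infdist_cutoff_abs_le
      measurable_continuous_sets_borel[OF continuous_on_infdist_cutoff assms(4)]
    by (intro integral_dominated_convergence[where w="\<lambda>_. 1"] AE_I2
        infdist_cutoff_tendsto_indicator[OF assms(1,2)]) auto
  ultimately show ?thesis by simp
qed

lemma measure_eqI_integral_continuous: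
  fixes M1 M2 :: "'c::metric_space measure"
  assumes "finite_measure M1" "finite_measure M2"
    and "sets M1 = sets borel" "sets M2 = sets borel"
    and "\<And>f. continuous_on UNIV f \<Longrightarrow> (\<integral>x. f x \<partial>M1) = (\<integral>x. (f x :: real) \<partial>M2)"
  shows "M1 = M2"
proof -
  have closed_eq: "emeasure M1 F = emeasure M2 F" if "closed F" for F
  proof (cases "F = {}")
    case False
    have "measure M1 F = measure M2 F"
      using integral_infdist_cutoff_tendsto_measure[OF that False assms(1,3)]
        integral_infdist_cutoff_tendsto_measure[OF that False assms(2,4)]
        assms(5)[OF continuous_on_infdist_cutoff] LIMSEQ_unique by auto
    then show ?thesis
      using assms(1-4) that by (simp add: finite_measure.emeasure_eq_measure)
  qed simp
  have sets_closed: "sets (borel :: 'c measure) = sigma_sets UNIV (Collect closed)"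
    by (subst borel_eq_closed) simp
  show ?thesis
    by (rule measure_eqI_generator_eq[where E="Collect closed" and \<Omega>=UNIV and A="\<lambda>_. UNIV"])
      (use closed_eq assms(3,4) sets_closed finite_measure.emeasure_finite[OF assms(1)]
        finite_measure.emeasure_finite[OF assms(2)]
        in \<open>auto simp: Int_stable_def\<close>)
qed

section \<open>Borel sets of a product of compact metric spaces\<close>

lemma compact_UNIV_finite_net:
  assumes "compact (UNIV :: 'c::metric_space set)" "0 < e"
  shows "\<exists>P :: 'c set. finite P \<and> (\<forall>x. \<exists>p\<in>P. dist x p < e)"
proof -
  obtain P where P: "finite P" "(UNIV :: 'c set) \<subseteq> (\<Union>p\<in>P. ball p e)"
    using assms unfolding compact_eq_totally_bounded by blast
  have "\<exists>p\<in>P. dist x p < e" for x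
  proof -
    obtain p where "p \<in> P" "x \<in> ball p e" using P(2) by blast
    then show ?thesis by (auto simp: dist_commute)
  qed
  with P(1) show ?thesis by blast
qed

lemma compact_UNIV_countable_denseE:
  assumes "compact (UNIV :: 'c::metric_space set)"
  obtains D :: "'c::metric_space set" where "countable D" "\<And>x e. 0 < e \<Longrightarrow> \<exists>p\<in>D. dist x p < e"
proof -
  have "\<exists>P :: 'c set. finite P \<and> (\<forall>x. \<exists>p\<in>P. dist x p < 1 / Suc n)" for n
    by (rule compact_UNIV_finite_net[OF assms]) simp
  then obtain P :: "nat \<Rightarrow> 'c set"
    where P: "\<And>n. finite (P n)" "\<And>n x. \<exists>p\<in>P n. dist x p < 1 / Suc n"
    by metis
  have "\<exists>p\<in>\<Union>(range P). dist x p < e" if e: "0 < e" for x e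
  proof -
    obtain n where "1 / Suc n < e" using nat_approx_posE[OF e] by blast
    then show ?thesis using P(2)[of n x] by force
  qed
  moreover have "countable (\<Union>(range P))" using P(1) by (simp add: countable_finite)
  ultimately show ?thesis using that by blast
qed

lemma open_eq_Union_ball_Times:
  fixes U :: "('a::metric_space \<times> 'b::metric_space) set"
  assumes D1: "\<And>x e. 0 < e \<Longrightarrow> \<exists>p\<in>D1. dist x p < e"
    and D2: "\<And>y e. 0 < e \<Longrightarrow> \<exists>q\<in>D2. dist y q < e"
    and "open U"
  shows "U = \<Union>{ball p (1 / Suc n) \<times> ball q (1 / Suc n) | p q n.
    p \<in> D1 \<and> q \<in> D2 \<and> ball p (1 / Suc n) \<times> ball q (1 / Suc n) \<subseteq> U}"
    (is "U = \<Union>?R")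
proof (rule equalityI)
  show "U \<subseteq> \<Union>?R"
  proof
    fix z assume "z \<in> U"
    then obtain x y e where z: "z = (x, y)" "0 < e" "ball (x, y) e \<subseteq> U"
      using \<open>open U\<close> open_contains_ball by (metis prod.exhaust)
    obtain n :: nat where n: "1 / Suc n < e / 4" using nat_approx_posE[of "e / 4"] z(2) by auto
    have pos: "0 < 1 / real (Suc n)" by simp
    obtain p where p: "p \<in> D1" "dist x p < 1 / Suc n" using D1[OF pos] by blast
    obtain q where q: "q \<in> D2" "dist y q < 1 / Suc n" using D2[OF pos] by blast
    have "ball p (1 / Suc n) \<times> ball q (1 / Suc n) \<subseteq> U"
    proof
      fix w assume "w \<in> ball p (1 / Suc n) \<times> ball q (1 / Suc n)"
      then obtain a b where w: "w = (a, b)" "dist p a < 1 / Suc n" "dist q b < 1 / Suc n"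
        by (cases w) auto
      then have "dist x a < e / 2" "dist y b < e / 2"
        using p q n dist_triangle[of x a p] dist_triangle[of y b q] by linarith+
      then have "dist (x, y) (a, b) < e"
        unfolding dist_Pair_Pair using sqrt_sum_squares_le_sum[of "dist x a" "dist y b"] by simp
      then show "w \<in> U" using z(3) w(1) by auto
    qed
    moreover have "z \<in> ball p (1 / Suc n) \<times> ball q (1 / Suc n)"
      using p q z(1) by (simp add: dist_commute)
    ultimately show "z \<in> \<Union>?R" using p(1) q(1) by blast
  qed
  show "\<Union>?R \<subseteq> U" by blast
qed

lemma sets_pair_borel_compact:
  assumes "compact (UNIV :: 'a::metric_space set)" "compact (UNIV :: 'b::metric_space set)"
  shows "sets (borel \<Otimes>\<^sub>M borel) = sets (borel :: ('a \<times> 'b) measure)"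
proof
  show "sets (borel \<Otimes>\<^sub>M borel) \<subseteq> sets (borel :: ('a \<times> 'b) measure)"
    by (intro sets_pair_in_sets borel_Times) auto
  obtain D1 :: "'a set" where D1: "countable D1" "\<And>x e. 0 < e \<Longrightarrow> \<exists>p\<in>D1. dist x p < e"
    using compact_UNIV_countable_denseE[OF assms(1)] by blast
  obtain D2 :: "'b set" where D2: "countable D2" "\<And>x e. 0 < e \<Longrightarrow> \<exists>p\<in>D2. dist x p < e"
    using compact_UNIV_countable_denseE[OF assms(2)] by blast
  have "U \<in> sets (borel \<Otimes>\<^sub>M borel)" if "open U" for U :: "('a \<times> 'b) set"
  proof -
    let ?R = "{ball p (1 / Suc n) \<times> ball q (1 / Suc n) | p q n.
      p \<in> D1 \<and> q \<in> D2 \<and> ball p (1 / Suc n) \<times> ball q (1 / Suc n) \<subseteq> U}"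
    have "?R \<subseteq> (\<lambda>(p, q, n::nat). ball p (1 / Suc n) \<times> ball q (1 / Suc n)) ` (D1 \<times> D2 \<times> UNIV)"
      by auto
    moreover have "countable (D1 \<times> D2 \<times> (UNIV :: nat set))" using D1(1) D2(1) by simp
    ultimately have "countable ?R" by (meson countable_image countable_subset)
    then have "\<Union>?R \<in> sets (borel \<Otimes>\<^sub>M borel)" by (rule sets.countable_Union) auto
    then show ?thesis using open_eq_Union_ball_Times[OF D1(2) D2(2) that] by simp
  qed
  then show "sets (borel :: ('a \<times> 'b) measure) \<subseteq> sets (borel \<Otimes>\<^sub>M borel)"
    unfolding sets_borel
    by (intro sets.sigma_sets_subset') (auto simp flip: space_pair_measure)
qed

section \<open>Coding a compact metric space by a closed set of reals\<close>

text \<open>Given finite \<open>1/(k+1)\<close>-nets \<open>e k 0, \<dots>, e k (m k - 1)\<close>, a point is coded by its address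
  (the least indices of net points close to it), read as the real number \<open>\<Sum>k. a k * weight k\<close>.
  The weights shrink by the factor \<open>3 * m k\<close>, so digit sequences that agree up to \<open>k\<close> have
  codes within \<open>weight k / 2\<close>, while sequences first differing at \<open>k\<close> have codes at least
  \<open>weight k / 2\<close> apart.\<close>

locale net_coding =
  fixes e :: "nat \<Rightarrow> nat \<Rightarrow> 'c::metric_space" and m :: "nat \<Rightarrow> nat"
  assumes compact_space: "compact (UNIV :: 'c set)"
    and m_pos: "\<And>k. 0 < m k"
    and net: "\<And>k x. \<exists>i<m k. dist x (e k i) < 1 / Suc k"
begin

definition weight :: "nat \<Rightarrow> real" where
  "weight k = 1 / (\<Prod>j\<le>k. 3 * real (m j))"

definition digits :: "(nat \<Rightarrow> nat) \<Rightarrow> bool" where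
  "digits a \<longleftrightarrow> (\<forall>k. a k < m k)"

definition code_of :: "(nat \<Rightarrow> nat) \<Rightarrow> real" where
  "code_of a = (\<Sum>k. real (a k) * weight k)"

definition realizable :: "(nat \<Rightarrow> nat) \<Rightarrow> bool" where
  "realizable a \<longleftrightarrow> digits a \<and> (\<exists>x. \<forall>k. dist x (e k (a k)) \<le> 1 / Suc k)"

definition point_of :: "(nat \<Rightarrow> nat) \<Rightarrow> 'c" where
  "point_of a = (THE x. \<forall>k. dist x (e k (a k)) \<le> 1 / Suc k)"

definition codes :: "real set" where
  "codes = code_of ` Collect realizable"

definition address :: "'c \<Rightarrow> nat \<Rightarrow> nat" where
  "address x k = (LEAST i. dist x (e k i) < 1 / Suc k)"

definition encode :: "'c \<Rightarrow> real" where
  "encode x = code_of (address x)"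

definition code_digits :: "real \<Rightarrow> nat \<Rightarrow> nat" where
  "code_digits y = inv_into (Collect realizable) code_of y"

definition decode :: "real \<Rightarrow> 'c" where
  "decode y = (if y \<in> codes then point_of (code_digits y) else e 0 0)"

lemma weight_pos: "0 < weight k"
  unfolding weight_def using m_pos by (intro divide_pos_pos prod_pos) auto

lemma digit_weight_0: "real (m 0) * weight 0 = 1 / 3"
  unfolding weight_def using m_pos[of 0] by simp

lemma digit_weight_Suc: "real (m (Suc k)) * weight (Suc k) = weight k / 3"
  unfolding weight_def using m_pos[of "Suc k"] by (simp add: prod.atMost_Suc field_simps)

lemma weight_Suc_le: "weight (Suc k) \<le> weight k / 3"
proof -
  have "1 * weight (Suc k) \<le> real (m (Suc k)) * weight (Suc k)"
    using m_pos[of "Suc k"] weight_pos[of "Suc k"] by (intro mult_right_mono) auto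
  then show ?thesis using digit_weight_Suc by simp
qed

lemma weight_add_le: "weight (k + i) \<le> weight k / 3 ^ i"
proof (induction i)
  case (Suc i)
  have "weight (k + Suc i) \<le> weight (k + i) / 3" using weight_Suc_le[of "k + i"] by simp
  also have "\<dots> \<le> weight k / 3 ^ Suc i" using Suc by simp
  finally show ?case .
qed simp

lemma weight_antimono:
  assumes "j \<le> k"
  shows "weight k \<le> weight j"
proof -
  have "weight k \<le> weight j / 3 ^ (k - j)" using weight_add_le[of j "k - j"] assms by simp
  also have "\<dots> \<le> weight j / 1" using weight_pos[of j] by (intro divide_left_mono) auto
  finally show ?thesis by simp
qed

lemma weight_le_power: "weight k \<le> (1 / 3) ^ Suc k"
proof -
  have "1 * weight 0 \<le> real (m 0) * weight 0"
    using m_pos[of 0] weight_pos[of 0] by (intro mult_right_mono) auto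
  then have "weight 0 \<le> 1 / 3" using digit_weight_0 by simp
  then show ?thesis using weight_add_le[of 0 k] by (simp add: power_one_over field_simps)
qed

lemma weight_less:
  assumes "0 < \<epsilon>"
  obtains k where "weight k < \<epsilon>"
proof -
  obtain k where "(1 / 3 :: real) ^ k < \<epsilon>" using real_arch_pow_inv[OF assms] by force
  moreover have "weight k * 3 \<le> (1 / 3) ^ k" using weight_le_power[of k] by simp
  ultimately have "weight k < \<epsilon>" using weight_pos[of k] by linarith
  then show ?thesis by (rule that)
qed

lemma sums_third_powers: "(\<lambda>i. c * (1 / 3) ^ i) sums (c * 3 / 2 :: real)"
  using sums_mult[OF geometric_sums[of "1 / 3 :: real"], of c] by simp

lemma digit_term_le:
  assumes "digits a"
  shows "real (a k) * weight k \<le> real (m k) * weight k"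
  using assms weight_pos[of k] by (intro mult_right_mono) (auto simp: digits_def less_imp_le)

lemma digit_term_le_power:
  assumes "digits a"
  shows "real (a k) * weight k \<le> (1 / 3) ^ Suc k"
proof (cases k)
  case 0
  then show ?thesis using digit_term_le[OF assms, of 0] digit_weight_0 by simp
next
  case (Suc j)
  then have "real (a k) * weight k \<le> weight j / 3"
    using digit_term_le[OF assms, of k] digit_weight_Suc[of j] by simp
  then show ?thesis using weight_le_power[of j] Suc by simp
qed

lemma summable_code: "digits a \<Longrightarrow> summable (\<lambda>k. real (a k) * weight k)"
  by (rule summable_comparison_test[where g="\<lambda>k. (1 / 3) ^ Suc k"])
    (use digit_term_le_power weight_pos in \<open>auto intro!: summable_geometric simp: less_imp_le\<close>)

lemma code_of_bounds:
  assumes "digits a"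
  shows "0 \<le> code_of a" "code_of a \<le> 1 / 2"
proof -
  show "0 \<le> code_of a"
    unfolding code_of_def using summable_code[OF assms]
    by (intro suminf_nonneg) (simp_all add: less_imp_le[OF weight_pos])
  have geometric: "(\<lambda>k. 1 / 3 * (1 / 3) ^ k) sums (1 / 2 :: real)"
    using sums_third_powers[of "1 / 3"] by simp
  have "code_of a \<le> (\<Sum>k. 1 / 3 * (1 / 3) ^ k)"
    unfolding code_of_def using digit_term_le_power[OF assms] summable_code[OF assms]
      sums_summable[OF geometric] by (intro suminf_le) (simp_all only: power_Suc)
  then show "code_of a \<le> 1 / 2" using sums_unique[OF geometric] by simp
qed

lemma code_tail_bounds:
  assumes "digits a"
  shows "0 \<le> (\<Sum>i. real (a (i + Suc k)) * weight (i + Suc k))"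
    and "(\<Sum>i. real (a (i + Suc k)) * weight (i + Suc k)) \<le> weight k / 2"
proof -
  have tail: "summable (\<lambda>i. real (a (i + Suc k)) * weight (i + Suc k))"
    using summable_code[OF assms] by (rule summable_ignore_initial_segment)
  then show "0 \<le> (\<Sum>i. real (a (i + Suc k)) * weight (i + Suc k))"
    by (intro suminf_nonneg) (simp_all add: less_imp_le[OF weight_pos])
  have "real (a (i + Suc k)) * weight (i + Suc k) \<le> weight k / 3 * (1 / 3) ^ i" for i
  proof -
    have "real (a (i + Suc k)) * weight (i + Suc k) \<le> weight (k + i) / 3"
      using digit_term_le[OF assms, of "Suc (k + i)"] digit_weight_Suc[of "k + i"]
      by (simp add: add.commute)
    also have "\<dots> \<le> weight k / 3 * (1 / 3) ^ i"
      using weight_add_le[of k i] by (simp add: power_one_over)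
    finally show ?thesis .
  qed
  then have "(\<Sum>i. real (a (i + Suc k)) * weight (i + Suc k)) \<le> (\<Sum>i. weight k / 3 * (1 / 3) ^ i)"
    using tail sums_summable[OF sums_third_powers] by (intro suminf_le) auto
  also have "\<dots> = weight k / 2"
    using sums_unique[OF sums_third_powers[of "weight k / 3"]] by simp
  finally show "(\<Sum>i. real (a (i + Suc k)) * weight (i + Suc k)) \<le> weight k / 2" .
qed

lemma code_of_split:
  "digits a \<Longrightarrow> code_of a = (\<Sum>j<k. real (a j) * weight j) + real (a k) * weight k
     + (\<Sum>i. real (a (i + Suc k)) * weight (i + Suc k))"
  unfolding code_of_def using suminf_split_initial_segment[OF summable_code, of a "Suc k"] by simp

lemma code_of_close:
  assumes "digits a" "digits b" "\<And>j. j \<le> k \<Longrightarrow> a j = b j"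
  shows "\<bar>code_of a - code_of b\<bar> \<le> weight k / 2"
proof -
  have "(\<Sum>j<k. real (a j) * weight j) = (\<Sum>j<k. real (b j) * weight j)"
    using assms(3) by (intro sum.cong) auto
  moreover have "real (a k) * weight k = real (b k) * weight k" using assms(3) by simp
  ultimately show ?thesis
    using code_of_split[OF assms(1), of k] code_of_split[OF assms(2), of k]
      code_tail_bounds[OF assms(1), of k] code_tail_bounds[OF assms(2), of k]
    by (simp only: abs_le_iff) linarith
qed

lemma code_of_separated:
  assumes "digits a" "digits b" "\<And>j. j < k \<Longrightarrow> a j = b j" "a k \<noteq> b k"
  shows "weight k / 2 \<le> \<bar>code_of a - code_of b\<bar>"
proof -
  have "(\<Sum>j<k. real (a j) * weight j) = (\<Sum>j<k. real (b j) * weight j)"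
    using assms(3) by (intro sum.cong) auto
  moreover have "weight k \<le> \<bar>real (a k) * weight k - real (b k) * weight k\<bar>"
  proof -
    have "1 \<le> \<bar>real (a k) - real (b k)\<bar>" using assms(4) by linarith
    then show ?thesis
      using weight_pos[of k] mult_right_mono[of 1 "\<bar>real (a k) - real (b k)\<bar>" "weight k"]
      by (simp add: abs_mult left_diff_distrib[symmetric])
  qed
  ultimately show ?thesis
    using code_of_split[OF assms(1), of k] code_of_split[OF assms(2), of k]
      code_tail_bounds[OF assms(1), of k] code_tail_bounds[OF assms(2), of k] by linarith
qed

lemma digits_eq_if_code_close:
  assumes "digits a" "digits b" "\<bar>code_of a - code_of b\<bar> < weight k / 2" "j \<le> k"
  shows "a j = b j"
proof (rule ccontr)
  assume "a j \<noteq> b j"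
  define i where "i = (LEAST i. a i \<noteq> b i)"
  have "a i \<noteq> b i" unfolding i_def using \<open>a j \<noteq> b j\<close> by (rule LeastI)
  moreover have "i \<le> j" unfolding i_def using \<open>a j \<noteq> b j\<close> by (rule Least_le)
  moreover have "a l = b l" if "l < i" for l using not_less_Least[OF that[unfolded i_def]] by blast
  ultimately have "weight i / 2 \<le> \<bar>code_of a - code_of b\<bar>" using code_of_separated[OF assms(1,2)] by blast
  moreover have "weight k \<le> weight i" using \<open>i \<le> j\<close> assms(4) by (intro weight_antimono) simp
  ultimately show False using assms(3) by linarith
qed

lemma inj_on_code_of: "inj_on code_of (Collect realizable)"
proof (rule inj_onI)
  fix a b assume "a \<in> Collect realizable" "b \<in> Collect realizable" "code_of a = code_of b"
  then show "a = b"
    using digits_eq_if_code_close[of a b] weight_pos by (auto simp: realizable_def)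
qed

lemma code_digits_inverse:
  assumes "y \<in> codes"
  shows "realizable (code_digits y)" "code_of (code_digits y) = y"
  using inv_into_into[of y code_of "Collect realizable"] f_inv_into_f[of y code_of "Collect realizable"]
    assms by (auto simp: codes_def code_digits_def)

lemma point_unique:
  assumes "\<And>k. dist x (e k (a k)) \<le> 1 / Suc k" "\<And>k. dist y (e k (a k)) \<le> 1 / Suc k"
  shows "x = y"
proof (rule ccontr)
  assume "x \<noteq> y"
  then obtain k :: nat where k: "1 / Suc k < dist x y / 2"
    using nat_approx_posE[of "dist x y / 2"] by auto
  have "dist x y \<le> dist x (e k (a k)) + dist y (e k (a k))" by (rule dist_triangle2)
  also have "\<dots> \<le> 2 / Suc k" using assms[of k] by simp
  finally show False using k by simp
qed

lemma point_of_eq: "(\<And>k. dist x (e k (a k)) \<le> 1 / Suc k) \<Longrightarrow> point_of a = x"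
  unfolding point_of_def by (rule the_equality) (use point_unique in blast)+

lemma dist_point_of: "realizable a \<Longrightarrow> dist (point_of a) (e k (a k)) \<le> 1 / Suc k"
  using point_of_eq unfolding realizable_def by metis

lemma address_bounds: "address x k < m k" "dist x (e k (address x k)) < 1 / Suc k"
proof -
  obtain i where i: "i < m k" "dist x (e k i) < 1 / Suc k" using net by blast
  show "dist x (e k (address x k)) < 1 / Suc k" unfolding address_def using i(2) by (rule LeastI)
  have "address x k \<le> i" unfolding address_def using i(2) by (rule Least_le)
  then show "address x k < m k" using i(1) by simp
qed

lemma realizable_address: "realizable (address x)"
  unfolding realizable_def digits_def using address_bounds by (blast intro: less_imp_le)

lemma point_of_address: "point_of (address x) = x"
  using address_bounds(2) by (intro point_of_eq less_imp_le)

lemma encode_in_codes: "encode x \<in> codes"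
  unfolding encode_def codes_def using realizable_address by blast

lemma decode_encode: "decode (encode x) = x"
proof -
  have "code_digits (encode x) = address x"
    unfolding encode_def code_digits_def using inj_on_code_of realizable_address
    by (intro inv_into_f_f) auto
  then show ?thesis using encode_in_codes point_of_address by (simp add: decode_def)
qed

lemma codes_subset: "codes \<subseteq> {0..1}"
  using code_of_bounds by (fastforce simp: codes_def realizable_def)

lemma digits_limit:
  assumes "\<And>n. digits (a n)" "Cauchy (\<lambda>n. code_of (a n))"
  obtains b N where "digits b" "\<And>j n. N j \<le> n \<Longrightarrow> a n j = b j"
proof -
  have "\<exists>N. \<forall>n\<ge>N. \<forall>n'\<ge>N. dist (code_of (a n)) (code_of (a n')) < weight j / 2" for j
    using weight_pos[of j] by (intro metric_CauchyD[OF assms(2)]) simp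
  then obtain N where N: "\<And>j n n'. N j \<le> n \<Longrightarrow> N j \<le> n' \<Longrightarrow>
      \<bar>code_of (a n) - code_of (a n')\<bar> < weight j / 2"
    unfolding dist_real_def by metis
  have "a n j = a (N j) j" if "N j \<le> n" for j n
    using digits_eq_if_code_close[OF assms(1) assms(1) N[OF that order.refl]] by simp
  moreover have "digits (\<lambda>j. a (N j) j)" using assms(1) by (simp add: digits_def)
  ultimately show ?thesis using that by blast
qed

lemma realizable_limit:
  assumes "\<And>n. realizable (a n)" "digits b" "\<And>j. \<forall>\<^sub>F n in sequentially. a n j = b j"
  shows "realizable b"
proof -
  obtain x \<phi> where \<phi>: "strict_mono \<phi>" "(\<lambda>n. point_of (a (\<phi> n))) \<longlonglongrightarrow> x"
    using compact_imp_seq_compact[OF compact_space]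
    unfolding seq_compact_def by (auto dest!: spec[of _ "\<lambda>n. point_of (a n)"] simp: comp_def)
  have "dist x (e j (b j)) \<le> 1 / Suc j" for j
  proof (rule LIMSEQ_le_const2)
    show "(\<lambda>n. dist (point_of (a (\<phi> n))) (e j (b j))) \<longlonglongrightarrow> dist x (e j (b j))"
      by (intro tendsto_dist \<phi>(2) tendsto_const)
    have "\<forall>\<^sub>F n in sequentially. a (\<phi> n) j = b j"
      using assms(3) filterlim_subseq[OF \<phi>(1)] by (rule eventually_compose_filterlim)
    then show "\<exists>N. \<forall>n\<ge>N. dist (point_of (a (\<phi> n))) (e j (b j)) \<le> 1 / Suc j"
      unfolding eventually_sequentially using dist_point_of[OF assms(1)] by metis
  qed
  then show ?thesis using assms(2) unfolding realizable_def by blast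
qed

lemma closed_codes: "closed codes"
  unfolding closed_sequential_limits
proof (intro allI impI, elim conjE)
  fix y l assume y: "\<forall>n. y n \<in> codes" and lim: "y \<longlonglongrightarrow> l"
  define a where "a n = code_digits (y n)" for n
  have a: "realizable (a n)" "code_of (a n) = y n" for n
    using code_digits_inverse y unfolding a_def by auto
  have "\<And>n. digits (a n)" "Cauchy (\<lambda>n. code_of (a n))"
    using a LIMSEQ_imp_Cauchy[OF lim] by (auto simp: realizable_def)
  then obtain b N where b: "digits b" "\<And>j n. N j \<le> n \<Longrightarrow> a n j = b j"
    using digits_limit by blast
  have agree: "\<forall>\<^sub>F n in sequentially. a n j = b j" for j
    using b(2) eventually_sequentially by blast
  have "y \<longlonglongrightarrow> code_of b"
  proof (rule tendstoI)
    fix \<epsilon> :: real assume "0 < \<epsilon>"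
    then obtain k where k: "weight k < \<epsilon>" by (rule weight_less)
    have "\<forall>\<^sub>F n in sequentially. \<forall>j\<in>{..k}. a n j = b j"
      using agree by (intro eventually_ball_finite) auto
    then show "\<forall>\<^sub>F n in sequentially. dist (y n) (code_of b) < \<epsilon>"
    proof eventually_elim
      case (elim n)
      then have "\<bar>code_of (a n) - code_of b\<bar> \<le> weight k / 2"
        using a(1) b(1) by (intro code_of_close) (auto simp: realizable_def)
      then show ?case using a(2) k weight_pos[of k] by (simp add: dist_real_def)
    qed
  qed
  then have "l = code_of b" using lim LIMSEQ_unique by blast
  moreover have "realizable b" using a(1) b(1) agree by (rule realizable_limit)
  ultimately show "l \<in> codes" unfolding codes_def by blast
qed

lemma continuous_on_decode: "continuous_on codes decode"
  unfolding continuous_on_iff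
proof (intro ballI allI impI)
  fix y \<epsilon> assume y: "y \<in> codes" and "(0::real) < \<epsilon>"
  then obtain k :: nat where k: "1 / Suc k < \<epsilon> / 2" using nat_approx_posE[of "\<epsilon> / 2"] by auto
  show "\<exists>d>0. \<forall>y'\<in>codes. dist y' y < d \<longrightarrow> dist (decode y') (decode y) < \<epsilon>"
  proof (intro exI[where x="weight k / 2"] conjI ballI impI)
    show "0 < weight k / 2" using weight_pos by simp
    fix y' assume y': "y' \<in> codes" "dist y' y < weight k / 2"
    define a where "a = code_digits y"
    define a' where "a' = code_digits y'"
    have a: "realizable a" "realizable a'" "code_of a = y" "code_of a' = y'"
      using code_digits_inverse y y'(1) unfolding a_def a'_def by auto
    then have "a' k = a k"
      using digits_eq_if_code_close[of a' a k k] y'(2) by (simp add: realizable_def dist_real_def)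
    then have "dist (point_of a') (point_of a) \<le> 2 / Suc k"
      using dist_point_of[OF a(1), of k] dist_point_of[OF a(2), of k]
        dist_triangle2[of "point_of a'" "point_of a" "e k (a k)"] by simp
    then show "dist (decode y') (decode y) < \<epsilon>"
      using y y'(1) k by (simp add: decode_def a_def a'_def)
  qed
qed

lemma encode_measurable: "encode \<in> borel_measurable borel"
proof -
  have "(\<lambda>x. real (address x k) * weight k) \<in> borel_measurable borel" for k
  proof -
    have [measurable]: "(\<lambda>x. dist x (e k i)) \<in> borel_measurable borel" for i
      by (intro borel_measurable_continuous_onI continuous_intros)
    have "(\<lambda>x. address x k) \<in> borel \<rightarrow>\<^sub>M count_space UNIV"
      unfolding address_def by measurable
    then show ?thesis by (rule measurable_compose) simp
  qed
  then show ?thesis unfolding encode_def code_of_def by (rule borel_measurable_suminf)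
qed

lemma decode_measurable: "decode \<in> borel \<rightarrow>\<^sub>M borel"
  unfolding decode_def
  using closed_codes continuous_on_decode
  by (intro borel_measurable_continuous_on_if) (auto simp: decode_def cong: continuous_on_cong)

end

lemma compact_UNIV_real_codingE:
  assumes "compact (UNIV :: 'c::metric_space set)"
  obtains C :: "real set" and enc :: "'c::metric_space \<Rightarrow> real" and dec :: "real \<Rightarrow> 'c"
  where "closed C" "C \<subseteq> {0..1}" "enc \<in> borel_measurable borel" "dec \<in> borel \<rightarrow>\<^sub>M borel"
    "continuous_on C dec" "\<forall>x. enc x \<in> C" "\<forall>x. dec (enc x) = x"
proof -
  have "\<exists>xs :: 'c list. \<forall>x. \<exists>i<length xs. dist x (xs ! i) < 1 / Suc k" for k
  proof -
    obtain P :: "'c set" where P: "finite P" "\<forall>x. \<exists>p\<in>P. dist x p < 1 / Suc k"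
      using compact_UNIV_finite_net[OF assms, of "1 / Suc k"] by auto
    then obtain xs where "set xs = P" using finite_list by blast
    then show ?thesis using P(2) by (metis in_set_conv_nth)
  qed
  then obtain L :: "nat \<Rightarrow> 'c list" where L: "\<And>k x. \<exists>i<length (L k). dist x (L k ! i) < 1 / Suc k"
    by metis
  have "0 < length (L k)" for k using L[of k undefined] by auto
  then interpret net_coding "\<lambda>k i. L k ! i" "\<lambda>k. length (L k)"
    using assms L by unfold_locales
  show ?thesis
    using that closed_codes codes_subset encode_measurable decode_measurable continuous_on_decode
      encode_in_codes decode_encode by blast
qed

section \<open>Sequential weak compactness of Borel probability measures\<close>

definition weak_conv_continuous :: "(nat \<Rightarrow> 'a::topological_space measure) \<Rightarrow> 'a measure \<Rightarrow> bool" where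
  "weak_conv_continuous M N \<longleftrightarrow>
     (\<forall>F :: 'a \<Rightarrow> real. continuous_on UNIV F \<longrightarrow> (\<lambda>n. \<integral>x. F x \<partial>M n) \<longlonglongrightarrow> (\<integral>x. F x \<partial>N))"

lemma weak_conv_continuousD:
  "weak_conv_continuous M N \<Longrightarrow> continuous_on UNIV (F :: 'a::topological_space \<Rightarrow> real) \<Longrightarrow>
    (\<lambda>n. \<integral>x. F x \<partial>M n) \<longlonglongrightarrow> (\<integral>x. F x \<partial>N)"
  unfolding weak_conv_continuous_def by blast

lemma weak_conv_m_bounded_continuous:
  assumes "\<And>n. real_distribution (M n)" "real_distribution N" "weak_conv_m M N"
    and "continuous_on UNIV G" "\<And>y. \<bar>G y\<bar> \<le> B"
  shows "(\<lambda>n. \<integral>y. G y \<partial>M n) \<longlonglongrightarrow> (\<integral>y. (G y :: real) \<partial>N)"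
  using weak_conv_imp_integral_bdd_continuous_conv[OF assms(1-3), of G B] assms(4,5)
  by (simp add: continuous_on_eq_continuous_at)

lemma tight_compact_support:
  fixes M :: "nat \<Rightarrow> real measure"
  assumes M: "\<And>n. real_distribution (M n)" and "compact C" and supp: "\<And>n. AE x in M n. x \<in> C"
  shows "tight M"
  unfolding tight_def
proof (intro conjI allI impI M)
  interpret M: real_distribution "M n" for n by (rule M)
  fix \<epsilon> :: real assume "0 < \<epsilon>"
  obtain c where c: "\<And>x. x \<in> C \<Longrightarrow> \<bar>x\<bar> \<le> c"
    using compact_imp_bounded[OF \<open>compact C\<close>] unfolding bounded_iff by auto
  have "C \<noteq> {}" using supp[of 0] M.AE_False by auto
  then have c_pos: "- c - 1 < c" using c by force
  have C: "C \<in> sets borel" using compact_imp_closed[OF \<open>compact C\<close>] by simp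
  have C_sub: "C \<subseteq> {- c - 1<..c}" using c by force
  have "1 - \<epsilon> < measure (M n) {- c - 1<..c}" for n
  proof -
    have "1 = measure (M n) C" using supp M.AE_in_set_eq_1 C by simp
    also have "\<dots> \<le> measure (M n) {- c - 1<..c}" using C C_sub by (intro M.finite_measure_mono) auto
    finally show ?thesis using \<open>0 < \<epsilon>\<close> by simp
  qed
  with c_pos show "\<exists>a b. a < b \<and> (\<forall>n. 1 - \<epsilon> < measure (M n) {a<..b})" by blast
qed

lemma weak_conv_m_closed_support:
  assumes M: "\<And>n. real_distribution (M n)" and N: "real_distribution N" and weak: "weak_conv_m M N"
    and "closed C" and supp: "\<And>n. AE x in M n. x \<in> C"
  shows "AE x in N. x \<in> C"
proof -
  interpret M: real_distribution "M n" for n by (rule M)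
  interpret N: real_distribution N by (rule N)
  have "C \<noteq> {}" using supp[of 0] M.AE_False by auto
  have integral_M: "(\<integral>y. infdist_cutoff C j y \<partial>M n) = 1" for j n
  proof -
    have "AE y in M n. infdist_cutoff C j y = 1" using supp by eventually_elim (rule infdist_cutoff_eq_1)
    moreover have "infdist_cutoff C j \<in> borel_measurable (M n)"
      using continuous_on_infdist_cutoff M.events_eq_borel by (rule measurable_continuous_sets_borel)
    ultimately show ?thesis using M.prob_space by (subst integral_cong_AE[where g="\<lambda>_. 1"]) auto
  qed
  have "(\<integral>y. infdist_cutoff C j y \<partial>N) = 1" for j
    using weak_conv_m_bounded_continuous[OF M N weak continuous_on_infdist_cutoff[of C j]
        infdist_cutoff_abs_le[of C j]]
    by (simp add: integral_M LIMSEQ_const_iff)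
  then have "measure N C = 1"
    using integral_infdist_cutoff_tendsto_measure[OF \<open>closed C\<close> \<open>C \<noteq> {}\<close> N.finite_measure_axioms]
    by (simp add: LIMSEQ_const_iff)
  then show ?thesis using N.AE_in_set_eq_1 \<open>closed C\<close> by simp
qed

lemma real_distributions_compact_support_weak_subseq:
  fixes M :: "nat \<Rightarrow> real measure"
  assumes M: "\<And>n. real_distribution (M n)" and "compact C" and supp: "\<And>n. AE x in M n. x \<in> C"
  obtains r N where "strict_mono r" "real_distribution N" "weak_conv_m (M \<circ> r) N" "AE x in N. x \<in> C"
proof -
  have "tight M" using assms by (rule tight_compact_support)
  then obtain r N where r: "strict_mono r" and N: "real_distribution N" and weak: "weak_conv_m (M \<circ> r) N"
    using tight_imp_convergent_subsubsequence[of M id] strict_mono_id by auto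
  moreover have "AE x in N. x \<in> C"
  proof (rule weak_conv_m_closed_support[OF _ N weak compact_imp_closed[OF \<open>compact C\<close>]])
    show "real_distribution ((M \<circ> r) n)" "AE x in (M \<circ> r) n. x \<in> C" for n
      unfolding comp_apply by (rule M, rule supp)
  qed
  ultimately show ?thesis by (rule that)
qed

lemma bounded_continuous_extension_real:
  fixes f :: "real \<Rightarrow> real"
  assumes "continuous_on C f" "closed C" "0 \<le> B" "\<And>y. y \<in> C \<Longrightarrow> \<bar>f y\<bar> \<le> B"
  obtains g where "continuous_on UNIV g" "\<And>y. y \<in> C \<Longrightarrow> g y = f y" "\<And>y. \<bar>g y\<bar> \<le> B"
proof -
  have "closedin (top_of_set UNIV) C" using assms(2) closed_closedin subtopology_UNIV by metis
  moreover have "\<And>y. y \<in> C \<Longrightarrow> norm (f y) \<le> B" using assms(4) by simp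
  ultimately obtain g where g: "continuous_on UNIV g" "\<And>y. y \<in> C \<Longrightarrow> g y = f y"
    "\<And>y. y \<in> UNIV \<Longrightarrow> norm (g y) \<le> B"
    using Tietze[OF assms(1) _ assms(3)] by blast
  have "\<bar>g y\<bar> \<le> B" for y using g(3)[of y] by simp
  with g(1,2) show ?thesis by (rule that)
qed

lemma weak_conv_continuous_decode:
  fixes M :: "nat \<Rightarrow> 'c::metric_space measure"
  assumes "compact (UNIV :: 'c set)" "\<And>n. sets (M n) = sets borel" "closed C"
    and enc: "enc \<in> borel_measurable borel" "\<forall>x. enc x \<in> C"
    and dec: "dec \<in> borel \<rightarrow>\<^sub>M borel" "continuous_on C dec" "\<forall>x. dec (enc x) = x"
    and R: "\<And>n. real_distribution (distr (M n) borel enc)"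
    and N: "real_distribution N" "AE y in N. y \<in> C"
    and weak: "weak_conv_m (\<lambda>n. distr (M n) borel enc) N"
  shows "weak_conv_continuous M (distr N borel dec)"
  unfolding weak_conv_continuous_def
proof (intro allI impI)
  interpret N: real_distribution N by (rule N(1))
  fix F :: "'c \<Rightarrow> real" assume F: "continuous_on UNIV F"
  have F_borel: "F \<in> borel_measurable borel" using F by (rule borel_measurable_continuous_onI)
  have enc_M: "enc \<in> M n \<rightarrow>\<^sub>M borel" for n using enc(1) measurable_cong_sets[OF assms(2) refl] by blast
  obtain B where B: "\<And>x. \<bar>F x\<bar> \<le> B"
    using continuous_on_compact_UNIV_boundedE[OF assms(1) F] by blast
  have "continuous_on C (\<lambda>y. F (dec y))" by (rule continuous_on_compose2[OF F dec(2)]) simp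
  moreover have "0 \<le> B" using B[of undefined] by linarith
  ultimately obtain G :: "real \<Rightarrow> real" where G: "continuous_on UNIV G"
    "\<And>y. y \<in> C \<Longrightarrow> G y = F (dec y)" "\<And>y. \<bar>G y\<bar> \<le> B"
    using bounded_continuous_extension_real[of C "\<lambda>y. F (dec y)" B] \<open>closed C\<close> B by blast
  have G_borel: "G \<in> borel_measurable borel" using G(1) by (rule borel_measurable_continuous_onI)
  have "(\<integral>y. G y \<partial>distr (M n) borel enc) = (\<integral>x. F x \<partial>M n)" for n
    using G(2) enc(2) dec(3) by (simp add: integral_distr[OF enc_M G_borel])
  moreover have "(\<integral>y. G y \<partial>N) = (\<integral>y. F (dec y) \<partial>N)"
    using N(2) G(2) G_borel measurable_compose[OF dec(1) F_borel]
    by (intro integral_cong_AE) (auto elim!: AE_mp simp: measurable_cong_sets[OF N.events_eq_borel refl])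
  moreover have "(\<integral>y. F (dec y) \<partial>N) = (\<integral>x. F x \<partial>distr N borel dec)"
    using dec(1) F_borel by (simp add: integral_distr)
  ultimately show "(\<lambda>n. \<integral>x. F x \<partial>M n) \<longlonglongrightarrow> (\<integral>x. F x \<partial>distr N borel dec)"
    using weak_conv_m_bounded_continuous[OF R N(1) weak G(1,3)] by simp
qed

theorem prob_measures_weak_convergent_subseq:
  fixes M :: "nat \<Rightarrow> 'c::metric_space measure"
  assumes "compact (UNIV :: 'c set)" "\<And>n. prob_space (M n)" "\<And>n. sets (M n) = sets borel"
  obtains r N where "strict_mono r" "prob_space N" "sets N = sets borel"
    "weak_conv_continuous (M \<circ> r) N"
proof -
  obtain C :: "real set" and enc :: "'c \<Rightarrow> real" and dec :: "real \<Rightarrow> 'c"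
    where C: "closed C" "C \<subseteq> {0..1}" and enc: "enc \<in> borel_measurable borel" "\<forall>x. enc x \<in> C"
      and dec: "dec \<in> borel \<rightarrow>\<^sub>M borel" "continuous_on C dec" "\<forall>x. dec (enc x) = x"
    by (rule compact_UNIV_real_codingE[OF assms(1)])
  have enc_M: "enc \<in> M n \<rightarrow>\<^sub>M borel" for n using enc(1) measurable_cong_sets[OF assms(3) refl] by blast
  define R where "R n = distr (M n) borel enc" for n
  have R: "real_distribution (R n)" for n
    unfolding R_def real_distribution_def real_distribution_axioms_def
    using prob_space.prob_space_distr[OF assms(2) enc_M] by simp
  have "compact C" using C compact_Icc compact_Int_closed[of "{0..1}" C] by (simp add: Int_absorb1)
  moreover have R_C: "AE y in R n. y \<in> C" for n
    unfolding R_def using enc(2) C(1) by (subst AE_distr_iff[OF enc_M]) auto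
  ultimately obtain r N where r: "strict_mono r" and N: "real_distribution N"
    and weak: "weak_conv_m (R \<circ> r) N" and N_C: "AE y in N. y \<in> C"
    by (rule real_distributions_compact_support_weak_subseq[OF R])
  have "weak_conv_continuous (M \<circ> r) (distr N borel dec)"
    using assms(1) _ C(1) enc dec _ N N_C
  proof (rule weak_conv_continuous_decode)
    show "sets ((M \<circ> r) n) = sets borel" for n using assms(3) by simp
    show "real_distribution (distr ((M \<circ> r) n) borel enc)" for n using R by (simp add: R_def)
    show "weak_conv_m (\<lambda>n. distr ((M \<circ> r) n) borel enc) N" using weak by (simp add: R_def comp_def)
  qed
  moreover have "prob_space (distr N borel dec)"
  proof -
    interpret N: real_distribution N by (rule N)
    show ?thesis by (rule N.prob_space_distr) (simp add: dec(1))
  qed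
  ultimately show ?thesis using r by (intro that) simp_all
qed

lemma continuous_on_parametric_integral:
  fixes G :: "'b::metric_space \<Rightarrow> 'a::metric_space \<Rightarrow> real"
  assumes "compact (UNIV :: 'b set)" "compact (UNIV :: 'a set)"
    and G: "continuous_on UNIV (\<lambda>p. G (fst p) (snd p))"
    and "finite_measure \<mu>" "sets \<mu> = sets borel"
  shows "continuous_on UNIV (\<lambda>x. \<integral>\<theta>. G \<theta> x \<partial>\<mu>)"
proof -
  have G_x: "continuous_on UNIV (G \<theta>)" for \<theta>
  proof -
    have "continuous_on UNIV (\<lambda>x::'a. (\<theta>, x))" by (intro continuous_intros)
    from continuous_on_compose2[OF G this] show ?thesis by simp
  qed
  have G_\<theta>: "continuous_on UNIV (\<lambda>\<theta>. G \<theta> x)" for x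
  proof -
    have "continuous_on UNIV (\<lambda>\<theta>::'b. (\<theta>, x))" by (intro continuous_intros)
    from continuous_on_compose2[OF G this] show ?thesis by simp
  qed
  have "compact (UNIV :: ('b \<times> 'a) set)" using compact_Times[OF assms(1,2)] by simp
  then obtain B where B: "\<And>p. \<bar>G (fst p) (snd p)\<bar> \<le> B"
    using continuous_on_compact_UNIV_boundedE[OF _ G] by blast
  show ?thesis
    unfolding continuous_on_sequentially comp_def
  proof (intro allI ballI impI, elim conjE)
    fix x :: "nat \<Rightarrow> 'a" and a assume "x \<longlonglongrightarrow> a"
    show "(\<lambda>n. \<integral>\<theta>. G \<theta> (x n) \<partial>\<mu>) \<longlonglongrightarrow> (\<integral>\<theta>. G \<theta> a \<partial>\<mu>)"
    proof (rule integral_dominated_convergence[where w="\<lambda>_. B"])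
      show "integrable \<mu> (\<lambda>_. B)" using assms(4) by (simp add: finite_measure.integrable_const)
      show "AE \<theta> in \<mu>. (\<lambda>n. G \<theta> (x n)) \<longlonglongrightarrow> G \<theta> a"
        using continuous_on_tendsto_compose[OF G_x \<open>x \<longlonglongrightarrow> a\<close>] by simp
      show "AE \<theta> in \<mu>. norm (G \<theta> (x n)) \<le> B" for n using B[of "(_, _)"] by simp
    qed (use G_\<theta> assms(5) in \<open>rule measurable_continuous_sets_borel\<close>)+
  qed
qed

definition pos_continuous :: "('a::topological_space \<Rightarrow> real) set" where
  "pos_continuous = {g. continuous_on UNIV g \<and> (\<forall>x. 0 < g x)}"

lemma pos_continuousD:
  "g \<in> pos_continuous \<Longrightarrow> continuous_on UNIV g"
  "g \<in> pos_continuous \<Longrightarrow> 0 < g x"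
  by (simp_all add: pos_continuous_def)

lemma continuous_on_ln_pos_continuous:
  "g \<in> pos_continuous \<Longrightarrow> continuous_on UNIV (\<lambda>x. ln (g x))"
  by (auto simp: pos_continuous_def less_imp_neq[symmetric] intro!: continuous_intros)

lemma infB_eq_INF_pos_continuous:
  "infB \<mu> \<tau> \<psi> N = (INF g\<in>pos_continuous. ereal (\<integral>x. ln (Bop \<mu> \<tau> \<psi> g x / g x) \<partial>Phi N))"
  by (simp add: infB_def pos_continuous_def)

lemma mult_pos_continuous_image:
  fixes \<psi> :: "'a::topological_space \<Rightarrow> real"
  assumes "\<psi> \<in> pos_continuous"
  shows "(\<lambda>g x. g x * \<psi> x) ` pos_continuous = pos_continuous"
proof
  show "(\<lambda>g x. g x * \<psi> x) ` pos_continuous \<subseteq> pos_continuous"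
    using assms by (auto simp: pos_continuous_def intro!: continuous_intros)
  show "pos_continuous \<subseteq> (\<lambda>g x. g x * \<psi> x) ` pos_continuous"
  proof
    fix h :: "'a \<Rightarrow> real" assume "h \<in> pos_continuous"
    then have "(\<lambda>x. h x / \<psi> x) \<in> pos_continuous" "h = (\<lambda>x. h x / \<psi> x * \<psi> x)"
      using assms by (auto simp: pos_continuous_def less_imp_neq[symmetric] intro!: continuous_intros)
    then show "h \<in> (\<lambda>g x. g x * \<psi> x) ` pos_continuous"
      by (intro image_eqI[where x="\<lambda>x. h x / \<psi> x"]) auto
  qed
qed

lemma ereal_le_add_real_iff: "x \<le> y + ereal c \<longleftrightarrow> x - ereal c \<le> y"
  by (cases x; cases y) auto

lemma INF_add_ereal: "(INF i\<in>I. f i + ereal c) = (INF i\<in>I. f i) + ereal c"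
proof (rule antisym)
  have "(INF i\<in>I. f i + ereal c) - ereal c \<le> f i" if "i \<in> I" for i
    using INF_lower[OF that, of "\<lambda>i. f i + ereal c"] by (simp add: ereal_le_add_real_iff)
  then have "(INF i\<in>I. f i + ereal c) - ereal c \<le> (INF i\<in>I. f i)" by (rule INF_greatest)
  then show "(INF i\<in>I. f i + ereal c) \<le> (INF i\<in>I. f i) + ereal c"
    by (simp add: ereal_le_add_real_iff)
qed (intro INF_greatest add_right_mono INF_lower)

lemma sets_Phi [simp]: "sets (Phi N) = sets borel"
  by (simp add: Phi_def)

lemma prob_space_Phi: "prob_space N \<Longrightarrow> sets N = sets borel \<Longrightarrow> prob_space (Phi N)"
  unfolding Phi_def
  by (intro prob_space.prob_space_distr measurable_continuous_sets_borel continuous_on_fst) auto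

lemma integral_Phi:
  fixes h :: "'a::topological_space \<Rightarrow> real"
  assumes "sets N = sets borel" "continuous_on UNIV h"
  shows "(\<integral>x. h x \<partial>Phi N) = (\<integral>\<omega>. h (fst \<omega>) \<partial>N)"
proof -
  have "fst \<in> N \<rightarrow>\<^sub>M borel"
    using continuous_on_fst[OF continuous_on_id] assms(1) by (rule measurable_continuous_sets_borel)
  moreover have "h \<in> borel_measurable borel" using assms(2) by (rule borel_measurable_continuous_onI)
  ultimately show ?thesis unfolding Phi_def by (rule integral_distr)
qed

lemma Phi_pair_measure:
  assumes "prob_space \<mu>" "sets N = sets borel"
  shows "Phi (N \<Otimes>\<^sub>M \<mu>) = N"
proof -
  have "Phi (N \<Otimes>\<^sub>M \<mu>) = distr (N \<Otimes>\<^sub>M \<mu>) N fst"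
    unfolding Phi_def using assms(2) by (intro distr_cong) auto
  then show ?thesis using prob_space.distr_pair_fst[OF assms(1)] by simp
qed

locale compact_system =
  fixes \<tau> :: "'b::metric_space \<Rightarrow> 'a::metric_space \<Rightarrow> 'a" and \<mu> :: "'b measure"
  assumes compact_states: "compact (UNIV :: 'a set)" and compact_params: "compact (UNIV :: 'b set)"
    and continuous_\<tau>: "continuous_on UNIV (\<lambda>(\<theta>, x). \<tau> \<theta> x)"
    and prob_\<mu>: "prob_space \<mu>" and sets_\<mu>: "sets \<mu> = sets borel"
begin

lemma continuous_on_comp_\<tau>:
  assumes "continuous_on UNIV f"
  shows "continuous_on UNIV (\<lambda>p. f (\<tau> (fst p) (snd p)))"
    and "continuous_on UNIV (\<lambda>\<omega>. f (\<tau> (snd \<omega>) (fst \<omega>)))"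
    and "continuous_on UNIV (\<lambda>\<theta>. f (\<tau> \<theta> x))"
proof -
  have "continuous_on UNIV (\<lambda>p. \<tau> (fst p) (snd p))"
    using continuous_\<tau> by (simp add: case_prod_beta')
  from continuous_on_compose2[OF assms this]
  show f\<tau>: "continuous_on UNIV (\<lambda>p. f (\<tau> (fst p) (snd p)))" by simp
  have "continuous_on UNIV (\<lambda>\<omega>::'a \<times> 'b. (snd \<omega>, fst \<omega>))" by (intro continuous_intros)
  from continuous_on_compose2[OF f\<tau> this]
  show "continuous_on UNIV (\<lambda>\<omega>. f (\<tau> (snd \<omega>) (fst \<omega>)))" by simp
  have "continuous_on UNIV (\<lambda>\<theta>::'b. (\<theta>, x))" by (intro continuous_intros)
  from continuous_on_compose2[OF f\<tau> this]
  show "continuous_on UNIV (\<lambda>\<theta>. f (\<tau> \<theta> x))" by simp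
qed

lemma continuous_on_Bop:
  assumes "continuous_on UNIV g" "continuous_on UNIV \<psi>"
  shows "continuous_on UNIV (Bop \<mu> \<tau> \<psi> g)"
  unfolding Bop_def
  using compact_params compact_states _ prob_space.finite_measure[OF prob_\<mu>] sets_\<mu>
  by (rule continuous_on_parametric_integral)
    (intro continuous_intros continuous_on_comp_\<tau>(1) assms)

lemma Bop_pos:
  assumes "g \<in> pos_continuous" "\<psi> \<in> pos_continuous"
  shows "0 < Bop \<mu> \<tau> \<psi> g x"
  unfolding Bop_def using compact_params prob_\<mu> sets_\<mu>
  by (rule integral_continuous_pos)
    (use assms in \<open>auto intro!: continuous_intros continuous_on_comp_\<tau>(3) simp: pos_continuous_def\<close>)

lemma continuous_on_ln_Bop_ratio:
  assumes "g \<in> pos_continuous" "\<psi> \<in> pos_continuous"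
  shows "continuous_on UNIV (\<lambda>x. ln (Bop \<mu> \<tau> \<psi> g x / g x))"
  using Bop_pos[OF assms] pos_continuousD[OF assms(1)]
    continuous_on_Bop[OF pos_continuousD(1)[OF assms(1)] pos_continuousD(1)[OF assms(2)]]
  by (intro continuous_intros) (auto simp: less_imp_neq[symmetric])

abbreviation Bmu :: "('a \<Rightarrow> real) \<Rightarrow> 'a \<Rightarrow> real" where
  "Bmu \<equiv> Bop \<mu> \<tau> (\<lambda>_. 1)"

lemma Bmu_eq: "Bmu f x = (\<integral>\<theta>. f (\<tau> \<theta> x) \<partial>\<mu>)"
  by (simp add: Bop_def)

lemma continuous_on_Bmu: "continuous_on UNIV f \<Longrightarrow> continuous_on UNIV (Bmu f)"
  by (rule continuous_on_Bop) simp_all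

text \<open>Replacing \<open>g\<close> by \<open>g \<psi>\<close> turns \<open>B_q\<close> into \<open>B_\<mu>\<close>:
  \<open>ln (B_q g / g) = ln (B_\<mu> (g \<psi>) / (g \<psi>)) + ln \<psi>\<close>, and \<open>g \<mapsto> g \<psi>\<close> permutes the positive
  continuous functions.\<close>

lemma infB_eq_entropy_v_add:
  assumes N: "prob_space N" "sets N = sets borel" and \<psi>: "\<psi> \<in> pos_continuous"
  shows "infB \<mu> \<tau> \<psi> N = entropy_v \<mu> \<tau> N + ereal (\<integral>x. ln (\<psi> x) \<partial>Phi N)"
proof -
  interpret Phi: prob_space "Phi N" using prob_space_Phi[OF N] .
  define E where "E h = (\<integral>x. ln (Bmu h x / h x) \<partial>Phi N)" for h
  define c where "c = (\<integral>x. ln (\<psi> x) \<partial>Phi N)"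
  have "(\<integral>x. ln (Bop \<mu> \<tau> \<psi> g x / g x) \<partial>Phi N) = E (\<lambda>x. g x * \<psi> x) + c"
    if g: "g \<in> pos_continuous" for g
  proof -
    have g\<psi>: "(\<lambda>x. g x * \<psi> x) \<in> pos_continuous" using g \<psi> mult_pos_continuous_image by blast
    have "ln (Bop \<mu> \<tau> \<psi> g x / g x) = ln (Bmu (\<lambda>x. g x * \<psi> x) x / (g x * \<psi> x)) + ln (\<psi> x)"
      for x using Bop_pos[OF g \<psi>, of x] pos_continuousD(2)[OF g, of x] pos_continuousD(2)[OF \<psi>, of x]
      by (simp add: Bop_def ln_div ln_mult)
    then show ?thesis
      unfolding E_def c_def
      using integrable_continuous_compact[OF compact_states _ Phi.finite_measure_axioms sets_Phi]
        continuous_on_ln_Bop_ratio[OF g\<psi>] continuous_on_ln_pos_continuous[OF \<psi>]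
      by (simp add: pos_continuous_def)
  qed
  then have "infB \<mu> \<tau> \<psi> N = (INF g\<in>pos_continuous. ereal (E (\<lambda>x. g x * \<psi> x) + c))"
    unfolding infB_eq_INF_pos_continuous by (intro INF_cong) auto
  also have "\<dots> = (INF h\<in>(\<lambda>g x. g x * \<psi> x) ` pos_continuous. ereal (E h) + ereal c)"
    by (simp add: image_image)
  also have "\<dots> = entropy_v \<mu> \<tau> N + ereal c"
    unfolding mult_pos_continuous_image[OF \<psi>] INF_add_ereal
    by (simp add: entropy_v_def infB_eq_INF_pos_continuous E_def)
  finally show ?thesis unfolding c_def .
qed

lemma entropy_v_nonpos: "entropy_v \<mu> \<tau> N \<le> 0"
proof -
  have "Bmu (\<lambda>_. 1) x = 1" for x by (simp add: Bmu_eq prob_space.prob_space[OF prob_\<mu>])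
  moreover have "(\<lambda>_. 1) \<in> pos_continuous" by (simp add: pos_continuous_def)
  ultimately show ?thesis
    unfolding entropy_v_def infB_eq_INF_pos_continuous by (intro INF_lower2) (auto simp: zero_ereal_def)
qed

end

section \<open>Stationary measures\<close>

context compact_system
begin

lemma compact_pairs: "compact (UNIV :: ('a \<times> 'b) set)"
  using compact_Times[OF compact_states compact_params] by simp

lemma sets_pair_measure_borel:
  "sets N = sets borel \<Longrightarrow> sets (N \<Otimes>\<^sub>M \<mu>) = sets (borel :: ('a \<times> 'b) measure)"
  using sets_pair_measure_cong[of N borel \<mu> borel] sets_\<mu>
    sets_pair_borel_compact[OF compact_states compact_params] by simp

lemma integral_pair_measure_continuous:
  fixes N :: "'a measure" and F :: "'a \<times> 'b \<Rightarrow> real"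
  assumes N: "prob_space N" "sets N = sets borel" and F: "continuous_on UNIV F"
  shows "(\<integral>\<omega>. F \<omega> \<partial>(N \<Otimes>\<^sub>M \<mu>)) = (\<integral>x. (\<integral>\<theta>. F (x, \<theta>) \<partial>\<mu>) \<partial>N)"
proof -
  interpret pair_prob_space N \<mu>
    using N(1) prob_\<mu> by (simp add: pair_prob_space_def pair_sigma_finite_def prob_space_imp_sigma_finite)
  have "integrable (N \<Otimes>\<^sub>M \<mu>) F"
    using compact_pairs F P.finite_measure_axioms sets_pair_measure_borel[OF N(2)]
    by (rule integrable_continuous_compact)
  from integral_fst'[OF this] show ?thesis by simp
qed

lemma Bmu_minus_eq_integral:
  assumes "continuous_on UNIV f"
  shows "Bmu f x - f x = (\<integral>\<theta>. f (\<tau> \<theta> x) - f x \<partial>\<mu>)"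
proof -
  interpret prob_space \<mu> by (rule prob_\<mu>)
  have "integrable \<mu> (\<lambda>\<theta>. f (\<tau> \<theta> x))"
    using compact_params continuous_on_comp_\<tau>(3)[OF assms] finite_measure_axioms sets_\<mu>
    by (rule integrable_continuous_compact)
  then show ?thesis by (simp add: Bmu_eq prob_space)
qed

lemma ln_Bmu_ge:
  assumes "g \<in> pos_continuous"
  shows "Bmu (\<lambda>y. ln (g y)) x \<le> ln (Bmu g x)"
  unfolding Bmu_eq using compact_params prob_\<mu> sets_\<mu>
  by (rule integral_ln_le_ln_integral)
    (use assms in \<open>auto intro: continuous_on_comp_\<tau>(3) simp: pos_continuous_def\<close>)

definition stationary :: "'a measure \<Rightarrow> bool" where
  "stationary \<nu> \<longleftrightarrow> prob_space \<nu> \<and> sets \<nu> = sets borel \<and>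
     (\<forall>f. continuous_on UNIV f \<longrightarrow> (\<integral>x. Bmu f x \<partial>\<nu>) = (\<integral>x. f x \<partial>\<nu>))"

text \<open>The law of the \<open>k\<close>-th point of a random orbit with parameters drawn independently
  from \<open>\<mu>\<close>, started at an arbitrary point.\<close>

primrec orbit_distr :: "nat \<Rightarrow> 'a measure" where
  "orbit_distr 0 = return borel undefined"
| "orbit_distr (Suc k) = distr (orbit_distr k \<Otimes>\<^sub>M \<mu>) borel (\<lambda>\<omega>. \<tau> (snd \<omega>) (fst \<omega>))"

declare orbit_distr.simps(2) [simp del]

lemma measurable_\<tau>_pair:
  "sets N = sets borel \<Longrightarrow> (\<lambda>\<omega>. \<tau> (snd \<omega>) (fst \<omega>)) \<in> N \<Otimes>\<^sub>M \<mu> \<rightarrow>\<^sub>M borel"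
  using continuous_on_comp_\<tau>(2)[OF continuous_on_id] sets_pair_measure_borel
  by (rule measurable_continuous_sets_borel)

lemma orbit_distr_borel_prob: "prob_space (orbit_distr k)" "sets (orbit_distr k) = sets borel"
proof (induction k)
  case (Suc k)
  then show "prob_space (orbit_distr (Suc k))"
    by (simp add: orbit_distr.simps(2) prob_space.prob_space_distr prob_space_pair prob_\<mu>
        measurable_\<tau>_pair)
qed (simp_all add: orbit_distr.simps(2) prob_space_return)

lemma integral_orbit_distr_Suc:
  assumes "continuous_on UNIV f"
  shows "(\<integral>x. f x \<partial>orbit_distr (Suc k)) = (\<integral>x. Bmu f x \<partial>orbit_distr k)"
proof -
  have "(\<integral>x. f x \<partial>orbit_distr (Suc k)) = (\<integral>\<omega>. f (\<tau> (snd \<omega>) (fst \<omega>)) \<partial>(orbit_distr k \<Otimes>\<^sub>M \<mu>))"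
    using measurable_\<tau>_pair[OF orbit_distr_borel_prob(2)] borel_measurable_continuous_onI[OF assms]
    by (simp add: orbit_distr.simps(2) integral_distr)
  also have "\<dots> = (\<integral>x. Bmu f x \<partial>orbit_distr k)"
    using integral_pair_measure_continuous[OF orbit_distr_borel_prob continuous_on_comp_\<tau>(2)[OF assms]]
    by (simp add: Bmu_eq)
  finally show ?thesis .
qed

definition cesaro_distr :: "nat \<Rightarrow> 'a measure" where
  "cesaro_distr n = measure_pmf (pmf_of_set {..n}) \<bind> orbit_distr"

lemma orbit_distr_measurable: "orbit_distr \<in> measure_pmf P \<rightarrow>\<^sub>M subprob_algebra borel"
  unfolding measurable_pmf_measure1 space_subprob_algebra
  using orbit_distr_borel_prob by (auto intro: prob_space_imp_subprob_space)

lemma cesaro_distr_borel_prob: "prob_space (cesaro_distr n)" "sets (cesaro_distr n) = sets borel"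
  unfolding cesaro_distr_def
  by (auto intro!: measure_pmf.prob_space_bind[OF _ orbit_distr_measurable] sets_bind
      simp: orbit_distr_borel_prob)

lemma integral_cesaro_distr:
  assumes "continuous_on UNIV f"
  shows "(\<integral>x. f x \<partial>cesaro_distr n) = (\<Sum>k\<le>n. \<integral>x. f x \<partial>orbit_distr k) / Suc n"
proof -
  obtain B where B: "\<And>x. \<bar>f x\<bar> \<le> B"
    using continuous_on_compact_UNIV_boundedE[OF compact_states assms] by blast
  have "(\<integral>x. f x \<partial>cesaro_distr n) = (\<integral>k. (\<integral>x. f x \<partial>orbit_distr k) \<partial>measure_pmf (pmf_of_set {..n}))"
    unfolding cesaro_distr_def
    using B borel_measurable_continuous_onI[OF assms] orbit_distr_measurable orbit_distr_borel_prob
    by (intro integral_bind[where K=borel and B=B and B'=1])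
      (auto simp: prob_space.emeasure_space_1 prob_space.finite_measure)
  then show ?thesis by (simp add: integral_pmf_of_set)
qed

lemma integral_cesaro_distr_Bmu_minus:
  assumes f: "continuous_on UNIV f"
  shows "(\<integral>x. Bmu f x - f x \<partial>cesaro_distr n)
    = ((\<integral>x. f x \<partial>orbit_distr (Suc n)) - (\<integral>x. f x \<partial>orbit_distr 0)) / Suc n"
proof -
  have integrable: "integrable (orbit_distr k) f" if "continuous_on UNIV f" for f :: "'a \<Rightarrow> real" and k
    using orbit_distr_borel_prob prob_space.finite_measure that
    by (blast intro: integrable_continuous_compact[OF compact_states])
  have "(\<integral>x. Bmu f x - f x \<partial>orbit_distr k)
      = (\<integral>x. f x \<partial>orbit_distr (Suc k)) - (\<integral>x. f x \<partial>orbit_distr k)" for k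
    using integral_orbit_distr_Suc[OF f, of k] integrable[OF continuous_on_Bmu[OF f]] integrable[OF f]
    by simp
  moreover have "continuous_on UNIV (\<lambda>x. Bmu f x - f x)"
    using f continuous_on_Bmu[OF f] by (intro continuous_intros)
  ultimately have "(\<integral>x. Bmu f x - f x \<partial>cesaro_distr n)
      = (\<Sum>k<Suc n. (\<integral>x. f x \<partial>orbit_distr (Suc k)) - (\<integral>x. f x \<partial>orbit_distr k)) / Suc n"
    by (simp add: integral_cesaro_distr lessThan_Suc_atMost)
  then show ?thesis by (simp only: sum_lessThan_telescope[of "\<lambda>k. \<integral>x. f x \<partial>orbit_distr k"])
qed

text \<open>Krylov--Bogolyubov: the Cesaro averages of the orbit laws are asymptotically stationary,
  so their weak limit points are stationary.\<close>

lemma stationary_exists: "\<exists>\<nu>. stationary \<nu>"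
proof -
  obtain r \<nu> where r: "strict_mono r" and \<nu>: "prob_space \<nu>" "sets \<nu> = sets borel"
    and weak: "weak_conv_continuous (cesaro_distr \<circ> r) \<nu>"
    by (rule prob_measures_weak_convergent_subseq[OF compact_states cesaro_distr_borel_prob])
  have "(\<integral>x. Bmu f x \<partial>\<nu>) = (\<integral>x. f x \<partial>\<nu>)" if f: "continuous_on UNIV f" for f
  proof -
    obtain B where B: "\<And>x. \<bar>f x\<bar> \<le> B"
      using continuous_on_compact_UNIV_boundedE[OF compact_states f] by blast
    have h: "continuous_on UNIV (\<lambda>x. Bmu f x - f x)"
      using f continuous_on_Bmu[OF f] by (intro continuous_intros)
    have bound: "\<bar>\<integral>x. Bmu f x - f x \<partial>cesaro_distr n\<bar> \<le> 2 * B / Suc n" for n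
    proof -
      have "\<bar>(\<integral>x. f x \<partial>orbit_distr k)\<bar> \<le> B" for k
        using orbit_distr_borel_prob(1) B by (rule prob_space_abs_integral_le)
      from this[of "Suc n"] this[of 0] show ?thesis
        unfolding integral_cesaro_distr_Bmu_minus[OF f] by (simp add: divide_right_mono)
    qed
    have "\<forall>\<^sub>F n in sequentially. norm (\<integral>x. Bmu f x - f x \<partial>cesaro_distr n) \<le> 2 * B / Suc n"
      using bound by (intro always_eventually) simp
    moreover have "(\<lambda>n. 2 * B / Suc n) \<longlonglongrightarrow> 0" using LIMSEQ_Suc[OF lim_const_over_n[of "2 * B"]] by simp
    ultimately have "(\<lambda>n. \<integral>x. Bmu f x - f x \<partial>cesaro_distr n) \<longlonglongrightarrow> 0"
      by (rule Lim_null_comparison)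
    then have "(\<lambda>n. \<integral>x. Bmu f x - f x \<partial>cesaro_distr (r n)) \<longlonglongrightarrow> 0"
      using LIMSEQ_subseq_LIMSEQ[OF _ r] by (simp add: comp_def)
    then have "(\<integral>x. Bmu f x - f x \<partial>\<nu>) = 0"
      using weak_conv_continuousD[OF weak h] LIMSEQ_unique by (simp add: comp_def)
    moreover have "integrable \<nu> f" "integrable \<nu> (Bmu f)"
      using \<nu> f continuous_on_Bmu[OF f] prob_space.finite_measure
      by (blast intro: integrable_continuous_compact[OF compact_states])+
    ultimately show ?thesis by simp
  qed
  then show ?thesis using \<nu> unfolding stationary_def by blast
qed

lemma continuous_on_holonomic_integrand:
  fixes f :: "'a \<Rightarrow> real"
  assumes "continuous_on UNIV f"
  shows "continuous_on UNIV (\<lambda>\<omega>::'a \<times> 'b. f (\<tau> (snd \<omega>) (fst \<omega>)) - f (fst \<omega>))"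
proof -
  have "continuous_on UNIV (\<lambda>\<omega>::'a \<times> 'b. f (fst \<omega>))"
    using continuous_on_compose2[OF assms continuous_on_fst[OF continuous_on_id]] by simp
  with continuous_on_comp_\<tau>(2)[OF assms] show ?thesis by (rule continuous_on_diff)
qed

lemma holonomic_stationary_pair:
  assumes "stationary \<nu>"
  shows "holonomic \<tau> (\<nu> \<Otimes>\<^sub>M \<mu>)"
  unfolding holonomic_def
proof (intro conjI allI impI)
  have \<nu>: "prob_space \<nu>" "sets \<nu> = sets borel" using assms by (auto simp: stationary_def)
  show "prob_space (\<nu> \<Otimes>\<^sub>M \<mu>)" using \<nu>(1) prob_\<mu> by (rule prob_space_pair)
  show "sets (\<nu> \<Otimes>\<^sub>M \<mu>) = sets borel" using \<nu>(2) by (rule sets_pair_measure_borel)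
  fix f :: "'a \<Rightarrow> real" assume f: "continuous_on UNIV f"
  from continuous_on_holonomic_integrand[OF f]
  have "(\<integral>\<omega>. f (\<tau> (snd \<omega>) (fst \<omega>)) - f (fst \<omega>) \<partial>(\<nu> \<Otimes>\<^sub>M \<mu>)) = (\<integral>x. Bmu f x - f x \<partial>\<nu>)"
    using integral_pair_measure_continuous[OF \<nu>] Bmu_minus_eq_integral[OF f] by simp
  also have "\<dots> = (\<integral>x. Bmu f x \<partial>\<nu>) - (\<integral>x. f x \<partial>\<nu>)"
    using \<nu> f continuous_on_Bmu[OF f] prob_space.finite_measure
    by (intro Bochner_Integration.integral_diff integrable_continuous_compact[OF compact_states]) auto
  also have "\<dots> = 0" using assms f by (simp add: stationary_def)
  finally show "(\<integral>\<omega>. f (\<tau> (snd \<omega>) (fst \<omega>)) - f (fst \<omega>) \<partial>(\<nu> \<Otimes>\<^sub>M \<mu>)) = 0" .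
qed

lemma entropy_v_stationary_pair_nonneg:
  assumes "stationary \<nu>"
  shows "0 \<le> entropy_v \<mu> \<tau> (\<nu> \<Otimes>\<^sub>M \<mu>)"
  unfolding entropy_v_def infB_eq_INF_pos_continuous
proof (rule INF_greatest)
  fix g :: "'a \<Rightarrow> real" assume g: "g \<in> pos_continuous"
  have \<nu>: "prob_space \<nu>" "sets \<nu> = sets borel" using assms by (auto simp: stationary_def)
  have one: "(\<lambda>_. 1) \<in> pos_continuous" by (simp add: pos_continuous_def)
  have ln_g: "continuous_on UNIV (\<lambda>x. ln (g x))" using g by (rule continuous_on_ln_pos_continuous)
  have integrable: "integrable \<nu> h" if "continuous_on UNIV h" for h :: "'a \<Rightarrow> real"
    using \<nu> that prob_space.finite_measure by (blast intro: integrable_continuous_compact[OF compact_states])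
  have "0 = (\<integral>x. Bmu (\<lambda>y. ln (g y)) x - ln (g x) \<partial>\<nu>)"
    using assms ln_g integrable[OF continuous_on_Bmu[OF ln_g]] integrable[OF ln_g]
    by (simp add: stationary_def)
  also have "\<dots> \<le> (\<integral>x. ln (Bmu g x / g x) \<partial>\<nu>)"
  proof (rule integral_mono)
    show "integrable \<nu> (\<lambda>x. ln (Bmu g x / g x))"
      using continuous_on_ln_Bop_ratio[OF g one] by (rule integrable)
    show "integrable \<nu> (\<lambda>x. Bmu (\<lambda>y. ln (g y)) x - ln (g x))"
      using integrable[OF continuous_on_diff[OF continuous_on_Bmu[OF ln_g] ln_g]] .
    show "Bmu (\<lambda>y. ln (g y)) x - ln (g x) \<le> ln (Bmu g x / g x)" for x
      using ln_Bmu_ge[OF g, of x] Bop_pos[OF g one, of x] pos_continuousD(2)[OF g, of x]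
      by (simp add: ln_div)
  qed
  finally show "0 \<le> ereal (\<integral>x. ln (Bmu g x / g x) \<partial>Phi (\<nu> \<Otimes>\<^sub>M \<mu>))"
    using Phi_pair_measure[OF prob_\<mu> \<nu>(2)] by simp
qed

end

section \<open>Equilibrium states\<close>

lemma tangent_slope_eq_derivative:
  fixes q :: "real \<Rightarrow> real"
  assumes tangent: "\<And>t. t * c \<le> q t" and lim: "((\<lambda>t. q t / t) \<longlongrightarrow> L) (at 0)"
  shows "c = L"
proof -
  have right: "((\<lambda>t. q t / t) \<longlongrightarrow> L) (at_right 0)" and left: "((\<lambda>t. q t / t) \<longlongrightarrow> L) (at_left 0)"
    using lim filterlim_at_split by blast+
  have "\<forall>\<^sub>F t in at_right 0. c \<le> q t / t"
    using tangent by (intro eventually_at_rightI[of 0 1]) (simp_all add: pos_le_divide_eq mult.commute)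
  then have "c \<le> L" by (rule tendsto_lowerbound[OF right _ trivial_limit_at_right_real])
  moreover have "\<forall>\<^sub>F t in at_left 0. q t / t \<le> c"
    using tangent by (intro eventually_at_leftI[of "-1"]) (simp_all add: neg_divide_le_eq mult.commute)
  then have "L \<le> c" by (rule tendsto_upperbound[OF left _ trivial_limit_at_left_real])
  ultimately show ?thesis by simp
qed

context compact_system
begin

lemma abs_integral_Phi_ln_le:
  fixes N :: "('a \<times> 'b) measure" and \<psi> :: "'a \<Rightarrow> real"
  assumes "prob_space N" "sets N = sets borel" "\<And>x. \<bar>ln (\<psi> x)\<bar> \<le> K"
  shows "\<bar>\<integral>x. ln (\<psi> x) \<partial>Phi N\<bar> \<le> K"
  by (rule prob_space_abs_integral_le) (use assms prob_space_Phi in auto)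

lemma pressure_finite:
  assumes \<psi>: "\<psi> \<in> pos_continuous"
  shows "\<bar>pressure \<mu> \<tau> \<psi>\<bar> \<noteq> \<infinity>"
proof -
  obtain K where K: "\<And>x. \<bar>ln (\<psi> x)\<bar> \<le> K"
    using continuous_on_compact_UNIV_boundedE[OF compact_states continuous_on_ln_pos_continuous[OF \<psi>]]
    by blast
  have "infB \<mu> \<tau> \<psi> N \<le> ereal K" if "holonomic \<tau> N" for N
  proof -
    have N: "prob_space N" "sets N = sets borel" using that by (auto simp: holonomic_def)
    have "entropy_v \<mu> \<tau> N + ereal (\<integral>x. ln (\<psi> x) \<partial>Phi N) \<le> 0 + ereal K"
      using entropy_v_nonpos abs_integral_Phi_ln_le[OF N, of \<psi> K] K
      by (intro add_mono) (auto simp: abs_le_iff)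
    then show ?thesis using infB_eq_entropy_v_add[OF N \<psi>] by simp
  qed
  then have upper: "pressure \<mu> \<tau> \<psi> \<le> ereal K" unfolding pressure_def by (intro SUP_least) auto
  obtain \<nu> where \<nu>: "stationary \<nu>" using stationary_exists by blast
  then have N: "prob_space (\<nu> \<Otimes>\<^sub>M \<mu>)" "sets (\<nu> \<Otimes>\<^sub>M \<mu>) = sets borel"
    using holonomic_stationary_pair by (auto simp: holonomic_def)
  have "ereal (- K) \<le> 0 + ereal (\<integral>x. ln (\<psi> x) \<partial>Phi (\<nu> \<Otimes>\<^sub>M \<mu>))"
    using abs_integral_Phi_ln_le[OF N, of \<psi> K] K by (simp add: abs_le_iff)
  also have "\<dots> \<le> infB \<mu> \<tau> \<psi> (\<nu> \<Otimes>\<^sub>M \<mu>)"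
    unfolding infB_eq_entropy_v_add[OF N \<psi>]
    using entropy_v_stationary_pair_nonneg[OF \<nu>] by (intro add_right_mono)
  also have "\<dots> \<le> pressure \<mu> \<tau> \<psi>"
    unfolding pressure_def using holonomic_stationary_pair[OF \<nu>] by (intro SUP_upper) auto
  finally show ?thesis using upper by auto
qed

lemma holonomic_weak_limit:
  assumes "\<And>n. holonomic \<tau> (N n)" "prob_space L" "sets L = sets borel"
    and weak: "weak_conv_continuous N L"
  shows "holonomic \<tau> L"
  unfolding holonomic_def
proof (intro conjI allI impI assms(2,3))
  fix f :: "'a \<Rightarrow> real" assume "continuous_on UNIV f"
  from weak_conv_continuousD[OF weak continuous_on_holonomic_integrand[OF this]]
  show "(\<integral>\<omega>. f (\<tau> (snd \<omega>) (fst \<omega>)) - f (fst \<omega>) \<partial>L) = 0"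
    using assms(1) \<open>continuous_on UNIV f\<close> by (simp add: holonomic_def LIMSEQ_const_iff)
qed

text \<open>\<open>infB\<close> is an infimum of weakly continuous functionals, hence weakly upper semicontinuous.\<close>

lemma infB_weak_limit_ge:
  assumes N: "\<And>n. sets (N n) = sets borel" and L: "sets L = sets borel"
    and weak: "weak_conv_continuous N L" and \<psi>: "\<psi> \<in> pos_continuous"
    and ge: "\<And>n. ereal (c n) \<le> infB \<mu> \<tau> \<psi> (N n)" and c: "c \<longlonglongrightarrow> p"
  shows "ereal p \<le> infB \<mu> \<tau> \<psi> L"
  unfolding infB_eq_INF_pos_continuous
proof (rule INF_greatest)
  fix g :: "'a \<Rightarrow> real" assume g: "g \<in> pos_continuous"
  define h where "h x = ln (Bop \<mu> \<tau> \<psi> g x / g x)" for x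
  have h: "continuous_on UNIV h" unfolding h_def using g \<psi> by (rule continuous_on_ln_Bop_ratio)
  then have "continuous_on UNIV (\<lambda>\<omega>::'a \<times> 'b. h (fst \<omega>))"
    using continuous_on_compose2[OF h continuous_on_fst[OF continuous_on_id]] by simp
  from weak_conv_continuousD[OF weak this]
  have lim: "(\<lambda>n. \<integral>x. h x \<partial>Phi (N n)) \<longlonglongrightarrow> (\<integral>x. h x \<partial>Phi L)"
    using integral_Phi[OF N h] integral_Phi[OF L h] by simp
  have "c n \<le> (\<integral>x. h x \<partial>Phi (N n))" for n
  proof -
    have "infB \<mu> \<tau> \<psi> (N n) \<le> ereal (\<integral>x. h x \<partial>Phi (N n))"
      unfolding infB_eq_INF_pos_continuous h_def using g by (rule INF_lower)
    from order_trans[OF ge[of n] this] show ?thesis by simp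
  qed
  then have "p \<le> (\<integral>x. h x \<partial>Phi L)" using LIMSEQ_le[OF c lim] by blast
  then show "ereal p \<le> ereal (\<integral>x. ln (Bop \<mu> \<tau> \<psi> g x / g x) \<partial>Phi L)" by (simp add: h_def)
qed

lemma equilibrium_state_exists:
  assumes \<psi>: "\<psi> \<in> pos_continuous"
  shows "\<exists>N. equilibrium_state \<mu> \<tau> \<psi> N"
proof -
  obtain p where p: "pressure \<mu> \<tau> \<psi> = ereal p"
    using pressure_finite[OF \<psi>] by (cases "pressure \<mu> \<tau> \<psi>") auto
  have "\<exists>N. holonomic \<tau> N \<and> ereal (p - 1 / Suc n) < infB \<mu> \<tau> \<psi> N" for n
  proof -
    have "ereal (p - 1 / Suc n) < pressure \<mu> \<tau> \<psi>" using p by simp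
    then show ?thesis unfolding pressure_def less_SUP_iff by auto
  qed
  then obtain N where hol_N: "\<And>n. holonomic \<tau> (N n)"
    and N_ge: "\<And>n. ereal (p - 1 / Suc n) < infB \<mu> \<tau> \<psi> (N n)"
    by metis
  have N: "\<And>n. prob_space (N n)" "\<And>n. sets (N n) = sets borel"
    using hol_N by (auto simp: holonomic_def)
  then obtain r L where r: "strict_mono r" and L: "prob_space L" "sets L = sets borel"
    and weak: "weak_conv_continuous (N \<circ> r) L"
    by (rule prob_measures_weak_convergent_subseq[OF compact_pairs])
  have hol: "holonomic \<tau> L" by (rule holonomic_weak_limit[OF _ L weak]) (simp add: hol_N)
  have "(\<lambda>n. p - 1 / Suc n) \<longlonglongrightarrow> p - 0"
    using LIMSEQ_Suc[OF lim_const_over_n[of 1]] by (intro tendsto_diff tendsto_const)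
  then have "(\<lambda>n. p - 1 / Suc (r n)) \<longlonglongrightarrow> p"
    using LIMSEQ_subseq_LIMSEQ[OF _ r] by (simp add: comp_def)
  moreover have "sets ((N \<circ> r) n) = sets borel" for n using N(2) by simp
  moreover have "ereal (p - 1 / Suc (r n)) \<le> infB \<mu> \<tau> \<psi> ((N \<circ> r) n)" for n
    using N_ge[of "r n"] by simp
  ultimately have "ereal p \<le> infB \<mu> \<tau> \<psi> L"
    by (intro infB_weak_limit_ge[OF _ L(2) weak \<psi>])
  moreover have "infB \<mu> \<tau> \<psi> L \<le> pressure \<mu> \<tau> \<psi>"
    unfolding pressure_def using hol by (intro SUP_upper) auto
  ultimately have "infB \<mu> \<tau> \<psi> L = pressure \<mu> \<tau> \<psi>" using p by simp
  then show ?thesis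
    using hol infB_eq_entropy_v_add[OF L \<psi>] unfolding equilibrium_state_def by auto
qed

lemma pressure_supporting_line:
  assumes \<psi>: "\<psi> \<in> pos_continuous" and eq: "equilibrium_state \<mu> \<tau> \<psi> N" and h: "continuous_on UNIV h"
  shows "real_of_ereal (pressure \<mu> \<tau> \<psi>) + t * (\<integral>x. h x \<partial>Phi N)
    \<le> real_of_ereal (pressure \<mu> \<tau> (\<lambda>x. exp (ln (\<psi> x) + t * h x)))"
proof -
  have hol: "holonomic \<tau> N" and N: "prob_space N" "sets N = sets borel"
    and P: "entropy_v \<mu> \<tau> N + ereal (\<integral>x. ln (\<psi> x) \<partial>Phi N) = pressure \<mu> \<tau> \<psi>"
    using eq by (auto simp: equilibrium_state_def holonomic_def)
  interpret Phi: prob_space "Phi N" using prob_space_Phi[OF N] .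
  define \<psi>' where "\<psi>' x = exp (ln (\<psi> x) + t * h x)" for x
  have \<psi>': "\<psi>' \<in> pos_continuous"
    unfolding \<psi>'_def pos_continuous_def using continuous_on_ln_pos_continuous[OF \<psi>] h
    by (auto intro!: continuous_intros)
  have "(\<integral>x. ln (\<psi>' x) \<partial>Phi N) = (\<integral>x. ln (\<psi> x) \<partial>Phi N) + t * (\<integral>x. h x \<partial>Phi N)"
    unfolding \<psi>'_def
    using integrable_continuous_compact[OF compact_states _ Phi.finite_measure_axioms sets_Phi]
      continuous_on_ln_pos_continuous[OF \<psi>] h
    by simp
  then have "pressure \<mu> \<tau> \<psi> + ereal (t * (\<integral>x. h x \<partial>Phi N)) = infB \<mu> \<tau> \<psi>' N"
    unfolding infB_eq_entropy_v_add[OF N \<psi>'] P[symmetric] by (simp add: add.assoc)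
  also have "\<dots> \<le> pressure \<mu> \<tau> \<psi>'"
    unfolding pressure_def using hol by (intro SUP_upper) auto
  finally have "pressure \<mu> \<tau> \<psi> + ereal (t * (\<integral>x. h x \<partial>Phi N)) \<le> pressure \<mu> \<tau> \<psi>'" .
  moreover obtain P P' where "pressure \<mu> \<tau> \<psi> = ereal P" "pressure \<mu> \<tau> \<psi>' = ereal P'"
    using pressure_finite[OF \<psi>] pressure_finite[OF \<psi>'] by force
  moreover have "(\<lambda>x. exp (ln (\<psi> x) + t * h x)) = \<psi>'" by (simp add: \<psi>'_def fun_eq_iff)
  ultimately show ?thesis by simp
qed

lemma Phi_equilibrium_states_eq:
  assumes \<psi>: "\<psi> \<in> pos_continuous"
    and diff: "gateaux_differentiable_C (\<lambda>\<phi>. real_of_ereal (pressure \<mu> \<tau> (\<lambda>x. exp (\<phi> x))))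
      (\<lambda>x. ln (\<psi> x))"
    and "equilibrium_state \<mu> \<tau> \<psi> N1" "equilibrium_state \<mu> \<tau> \<psi> N2"
  shows "Phi N1 = Phi N2"
proof -
  define P where "P \<phi> = real_of_ereal (pressure \<mu> \<tau> (\<lambda>x. exp (\<phi> x)))" for \<phi> :: "'a \<Rightarrow> real"
  obtain L where L: "\<And>h. continuous_on UNIV h \<Longrightarrow>
      ((\<lambda>t. (P (\<lambda>x. ln (\<psi> x) + t * h x) - P (\<lambda>x. ln (\<psi> x))) / t) \<longlongrightarrow> L h) (at 0)"
    using diff unfolding gateaux_differentiable_C_def P_def by blast
  have "P (\<lambda>x. ln (\<psi> x)) = real_of_ereal (pressure \<mu> \<tau> \<psi>)"
    using pos_continuousD(2)[OF \<psi>] by (simp add: P_def)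
  then have derivative: "(\<integral>x. h x \<partial>Phi N) = L h"
    if "equilibrium_state \<mu> \<tau> \<psi> N" "continuous_on UNIV h" for N h
    using tangent_slope_eq_derivative[OF _ L[OF that(2)]] pressure_supporting_line[OF \<psi> that]
    by (simp add: P_def algebra_simps)
  have Phi: "prob_space (Phi N)" if "equilibrium_state \<mu> \<tau> \<psi> N" for N
    using that prob_space_Phi by (auto simp: equilibrium_state_def holonomic_def)
  show ?thesis
    using assms(3,4) derivative
    by (intro measure_eqI_integral_continuous prob_space.finite_measure Phi) auto
qed

end

theorem mainTheorem8:
  fixes \<tau> :: "'b::metric_space \<Rightarrow> 'a::metric_space \<Rightarrow> 'a"
    and \<mu> :: "'b measure" and \<psi> :: "'a \<Rightarrow> real"
  assumes "compact (UNIV :: 'a set)" and "compact (UNIV :: 'b set)"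
    and "continuous_on UNIV (\<lambda>(\<theta>, x). \<tau> \<theta> x)"
    and "prob_space \<mu>" and "sets \<mu> = sets borel"
    and "continuous_on UNIV \<psi>" and "\<forall>x. \<psi> x > 0"
    and "gateaux_differentiable_C (\<lambda>\<phi>. real_of_ereal (pressure \<mu> \<tau> (\<lambda>x. exp (\<phi> x)))) (\<lambda>x. ln (\<psi> x))"
  shows "card {Phi N | N. equilibrium_state \<mu> \<tau> \<psi> N} = 1"
proof -
  interpret compact_system \<tau> \<mu> by (rule compact_system.intro) (rule assms)+
  have \<psi>: "\<psi> \<in> pos_continuous" using assms(6,7) by (simp add: pos_continuous_def)
  obtain N0 where N0: "equilibrium_state \<mu> \<tau> \<psi> N0" using equilibrium_state_exists[OF \<psi>] by blast
  have "{Phi N | N. equilibrium_state \<mu> \<tau> \<psi> N} = {Phi N0}"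
    using Phi_equilibrium_states_eq[OF \<psi> assms(8) _ N0] N0 by blast
  then show ?thesis by simp
qed

end
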